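(* With notation as in the context, for $|z|<1$ one has $F^{W}_q(z:p_1,\dots,p_n)=(1-z)^{-W}F^{0}_q(z:p_1,\dots,p_n)$. Consequently, if $L(q:p_1,\dots,p_n)$ and $L(q:s_1,\dots,s_n)$ have the same generating function (equivalently, are isospectral), then for every $W\ge0$ the spaces $L^{(W)}(q:p_1,\dots,p_n)$ and $L^{(W)}(q:s_1,\dots,s_n)$ have the same generating function (equivalently, are isospectral).
   Context: Let $R(\theta)=\begin{pmatrix}\cos 2\pi\theta & \sin 2\pi\theta\\ -\sin 2\pi\theta & \cos 2\pi\theta\end{pmatrix}$. For integers $q\ge2$, $W\ge0$ and $p_1,\dots,p_n$ with $\gcd(p_1,\dots,p_n,q)=1$, $g=\mathrm{diag}(R(p_1/q),\dots,R(p_n/q),I_W)\in O(2n+W)$, $G=\langle g\rangle$, and $L^{(W)}(q:p_1,\dots,p_n)=S^{2n+W-1}/G$ with the metric induced from the round unit sphere; $L(q:\cdot)=L^{(0)}(q:\cdot)$. Let $\mathcal H^k$ be the space of restrictions to the sphere of harmonic homogeneous polynomials of degree $k$ on $\mathbf R^{2n+W}$, $\mathcal H^k_G$ its $G$-invariant subspace, and $F^W_q(z:p_1,\dots,p_n)=\sum_{k\ge0}(\dim\mathcal H^k_G)z^k$ the generating function of the spectrum (the multiplicity of eigenvalue $k(k+2n+W-2)$ is $\dim\mathcal H^k_G$, and there are no other eigenvalues). *)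

theory Defs
  imports "HOL-Analysis.Analysis" "HOL-Library.Function_Algebras"
begin

text \<open>Points of R^N are modelled as functions nat => real vanishing at indices >= N.\<close>

definition sphere_pts :: "nat \<Rightarrow> (nat \<Rightarrow> real) set" where
  "sphere_pts N = {x. (\<forall>i\<ge>N. x i = 0) \<and> (\<Sum>i<N. (x i)^2) = 1}"

text \<open>A polynomial in the variables x_0..x_(N-1) is given by a finitely supported
  coefficient function on multi-indices.\<close>

definition hom_poly_coeffs :: "nat \<Rightarrow> nat \<Rightarrow> ((nat \<Rightarrow> nat) \<Rightarrow> real) \<Rightarrow> bool" where
  "hom_poly_coeffs N k c \<longleftrightarrow> finite {a. c a \<noteq> 0} \<and>
     (\<forall>a. c a \<noteq> 0 \<longrightarrow> (\<forall>i\<ge>N. a i = 0) \<and> (\<Sum>i<N. a i) = k)"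

definition poly_fun :: "nat \<Rightarrow> ((nat \<Rightarrow> nat) \<Rightarrow> real) \<Rightarrow> (nat \<Rightarrow> real) \<Rightarrow> real" where
  "poly_fun N c x = (\<Sum>a\<in>{a. c a \<noteq> 0}. c a * (\<Prod>i<N. x i ^ a i))"

text \<open>Coefficients of the Laplacian of the polynomial with coefficients c:
  the coefficient of x^b in Delta(sum c_a x^a) is sum_i (b_i+2)(b_i+1) c(b + 2 e_i).\<close>

definition laplacian_coeffs :: "nat \<Rightarrow> ((nat \<Rightarrow> nat) \<Rightarrow> real) \<Rightarrow> (nat \<Rightarrow> nat) \<Rightarrow> real" where
  "laplacian_coeffs N c b = (\<Sum>i<N. real ((b i + 2) * (b i + 1)) * c (b(i := b i + 2)))"

definition harmonic_coeffs :: "nat \<Rightarrow> ((nat \<Rightarrow> nat) \<Rightarrow> real) \<Rightarrow> bool" where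
  "harmonic_coeffs N c \<longleftrightarrow> (\<forall>b. laplacian_coeffs N c b = 0)"

text \<open>H^k: restrictions to S^(N-1) of harmonic homogeneous polynomials of degree k
  (functions are set to 0 off the sphere).\<close>

definition harm_space :: "nat \<Rightarrow> nat \<Rightarrow> ((nat \<Rightarrow> real) \<Rightarrow> real) set" where
  "harm_space N k = {(\<lambda>x. if x \<in> sphere_pts N then poly_fun N c x else 0) | c.
       hom_poly_coeffs N k c \<and> harmonic_coeffs N c}"

text \<open>The generator g = diag(R(p_1/q),...,R(p_n/q), I_W) acting on column vectors:
  block j acts on coordinates 2j, 2j+1.\<close>

definition lens_gen :: "nat \<Rightarrow> int list \<Rightarrow> (nat \<Rightarrow> real) \<Rightarrow> (nat \<Rightarrow> real)" where
  "lens_gen q p x = (\<lambda>i. if i < 2 * length p then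
      (let t = 2 * pi * real_of_int (p ! (i div 2)) / real q in
        if even i then cos t * x i + sin t * x (i + 1)
        else - sin t * x (i - 1) + cos t * x i)
      else x i)"

definition lens_group :: "nat \<Rightarrow> int list \<Rightarrow> ((nat \<Rightarrow> real) \<Rightarrow> (nat \<Rightarrow> real)) set" where
  "lens_group q p = {(lens_gen q p) ^^ m | m. True}"

definition invariant_harm_space :: "nat \<Rightarrow> nat \<Rightarrow> int list \<Rightarrow> nat \<Rightarrow> ((nat \<Rightarrow> real) \<Rightarrow> real) set" where
  "invariant_harm_space W q p k =
     {f \<in> harm_space (2 * length p + W) k.
        \<forall>h\<in>lens_group q p. \<forall>x\<in>sphere_pts (2 * length p + W). f (h x) = f x}"

definition fun_dim :: "('a \<Rightarrow> real) set \<Rightarrow> nat" where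
  "fun_dim V = vector_space.dim (\<lambda>(c::real) f x. c * f x) V"

definition gen_fun :: "nat \<Rightarrow> nat \<Rightarrow> int list \<Rightarrow> complex \<Rightarrow> complex" where
  "gen_fun W q p z = (\<Sum>k. of_nat (fun_dim (invariant_harm_space W q p k)) * z ^ k)"

end

theory Submission
  imports Defs "HOL-Computational_Algebra.Polynomial"
begin

(* Put N = 2n + W, the dimension of the space containing the sphere of L^(W)(q:p).  Passing
   from W to W+1 adds a coordinate x_N that g fixes, and the heart of the proof is the formula
   dim H^k_G(W+1) = sum_{j<=k} dim H^j_G(W); for generating functions this says
   F^(W+1) = F^W / (1 - z), and the corollary follows by induction on W.
   Restriction to the sphere is injective on homogeneous polynomials, so H^k_G is identified
   with the space inv_harm q p N k of coefficient functions of homogeneous, harmonic,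
   g-invariant polynomials.  Differentiation d/dx_N maps inv_harm (N+1) k onto
   inv_harm (N+1) (k-1) with kernel inv_harm N k, and rank-nullity gives the formula.
   Surjectivity requires every invariant polynomial to be the Laplacian of an invariant one:
   Delta o |x|^2 is injective (it is positive for the Fischer inner product) and preserves
   invariants, because the Laplacian is a sum of second directional derivatives and g acts by
   rotations of coordinate pairs. *)

section \<open>Homogeneous polynomials given by coefficient functions\<close>

definition mindex :: "nat \<Rightarrow> nat \<Rightarrow> (nat \<Rightarrow> nat) set" where
  "mindex N k = {a. (\<forall>i\<ge>N. a i = 0) \<and> (\<Sum>i<N. a i) = k}"

definition monom_val :: "nat \<Rightarrow> (nat \<Rightarrow> nat) \<Rightarrow> (nat \<Rightarrow> real) \<Rightarrow> real" where
  "monom_val N a x = (\<Prod>i<N. x i ^ a i)"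

definition hpoly :: "nat \<Rightarrow> nat \<Rightarrow> ((nat \<Rightarrow> nat) \<Rightarrow> real) \<Rightarrow> (nat \<Rightarrow> real) \<Rightarrow> real" where
  "hpoly N k c x = (\<Sum>a\<in>mindex N k. c a * monom_val N a x)"

lemma finite_mindex: "finite (mindex N k)"
proof -
  have "mindex N k \<subseteq> {f. \<forall>x. (x \<in> {..<N} \<longrightarrow> f x \<in> {..k}) \<and> (x \<notin> {..<N} \<longrightarrow> f x = 0)}"
  proof
    fix a assume a: "a \<in> mindex N k"
    { fix i assume "i < N"
      then have "a i \<le> (\<Sum>i<N. a i)" by (intro member_le_sum) auto
      then have "a i \<le> k" using a by (simp add: mindex_def) }
    then show "a \<in> {f. \<forall>x. (x \<in> {..<N} \<longrightarrow> f x \<in> {..k}) \<and> (x \<notin> {..<N} \<longrightarrow> f x = 0)}"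
      using a by (auto simp: mindex_def)
  qed
  then show ?thesis by (rule finite_subset) (intro finite_set_of_finite_funs; simp)
qed

lemma mindex_le: "a \<in> mindex N k \<Longrightarrow> i < N \<Longrightarrow> a i \<le> k"
  unfolding mindex_def by (auto intro: member_le_sum[of i "{..<N}" a, simplified] order_trans)

lemma mindex_0: "mindex 0 k = (if k = 0 then {\<lambda>_. 0} else {})"
  by (auto simp: mindex_def)

lemma sum_upd_remove:
  assumes "i < (N::nat)"
  shows "(\<Sum>j<N. (b(i := m)) j) = m + (\<Sum>j\<in>{..<N}-{i}. b j)"
  using assms by (simp add: sum.remove)

lemma mindex_add2_iff:
  assumes "i < N"
  shows "b(i := b i + 2) \<in> mindex N (d+2) \<longleftrightarrow> b \<in> mindex N d"
proof -
  have "(\<Sum>j<N. b j) = b i + (\<Sum>j\<in>{..<N}-{i}. b j)" using assms by (simp add: sum.remove)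
  moreover have "(\<forall>j\<ge>N. (b(i := b i + 2)) j = 0) \<longleftrightarrow> (\<forall>j\<ge>N. b j = 0)" using assms by auto
  ultimately show ?thesis using sum_upd_remove[OF assms, of b "b i + 2"] by (auto simp: mindex_def)
qed

lemma sum_mindex_shift2:
  assumes "i < N"
  shows "(\<Sum>a\<in>mindex N (d+2). if 2 \<le> a i then F a else 0) = (\<Sum>b\<in>mindex N d. F (b(i := b i + 2)))"
proof -
  have "(\<Sum>a\<in>mindex N (d+2). if 2 \<le> a i then F a else 0) = (\<Sum>a\<in>{a\<in>mindex N (d+2). 2 \<le> a i}. F a)"
    by (simp add: sum.inter_filter[symmetric] finite_mindex)
  also have "\<dots> = (\<Sum>b\<in>mindex N d. F (b(i := b i + 2)))"
  proof (rule sum.reindex_bij_witness[where j="\<lambda>a. a(i := a i - 2)" and i="\<lambda>b. b(i := b i + 2)"])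
    fix a assume a: "a \<in> {a \<in> mindex N (d + 2). 2 \<le> a i}"
    then have a_eq: "(a(i := a i - 2))(i := (a(i := a i - 2)) i + 2) = a" by (auto simp: fun_eq_iff)
    then show "(a(i := a i - 2))(i := (a(i := a i - 2)) i + 2) = a" .
    show "a(i := a i - 2) \<in> mindex N d"
      using a a_eq mindex_add2_iff[OF assms, of "a(i := a i - 2)" d] by simp
    show "F ((a(i := a i - 2))(i := (a(i := a i - 2)) i + 2)) = F a" using a_eq by simp
  next
    fix b assume "b \<in> mindex N d"
    then show "b(i := b i + 2) \<in> {a \<in> mindex N (d + 2). 2 \<le> a i}"
      using mindex_add2_iff[OF assms] by simp
    show "(b(i := b i + 2))(i := (b(i := b i + 2)) i - 2) = b" by auto
  qed
  finally show ?thesis .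
qed

lemma hom_poly_coeffs_iff: "hom_poly_coeffs N k c \<longleftrightarrow> (\<forall>a. c a \<noteq> 0 \<longrightarrow> a \<in> mindex N k)"
proof
  assume "\<forall>a. c a \<noteq> 0 \<longrightarrow> a \<in> mindex N k"
  then have "{a. c a \<noteq> 0} \<subseteq> mindex N k" by auto
  then show "hom_poly_coeffs N k c" using finite_mindex[of N k] \<open>\<forall>a. _\<close>
    by (auto simp: hom_poly_coeffs_def mindex_def intro: finite_subset)
qed (auto simp: hom_poly_coeffs_def mindex_def)

lemma hom_poly_coeffs_zero: "hom_poly_coeffs N k c \<Longrightarrow> a \<notin> mindex N k \<Longrightarrow> c a = 0"
  by (auto simp: hom_poly_coeffs_iff)

lemma hom_poly_coeffs_add:
  "hom_poly_coeffs N d x \<Longrightarrow> hom_poly_coeffs N d y \<Longrightarrow> hom_poly_coeffs N d (\<lambda>a. x a + y a)"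
  unfolding hom_poly_coeffs_iff by (metis add.right_neutral)

lemma hom_poly_coeffs_scale: "hom_poly_coeffs N d x \<Longrightarrow> hom_poly_coeffs N d (\<lambda>a. c * x a)"
  unfolding hom_poly_coeffs_iff by auto

lemma poly_fun_hpoly: assumes "hom_poly_coeffs N k c" shows "poly_fun N c = hpoly N k c"
proof
  fix x
  have "poly_fun N c x = (\<Sum>a\<in>{a. c a \<noteq> 0}. c a * monom_val N a x)"
    by (simp add: poly_fun_def monom_val_def)
  also have "\<dots> = hpoly N k c x" unfolding hpoly_def
    using assms finite_mindex[of N k]
    by (intro sum.mono_neutral_left) (auto simp: hom_poly_coeffs_iff)
  finally show "poly_fun N c x = hpoly N k c x" .
qed

lemma monom_val_cong: "(\<And>i. i < N \<Longrightarrow> x i = y i) \<Longrightarrow> monom_val N a x = monom_val N a y"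
  by (simp add: monom_val_def)

lemma hpoly_cong: "(\<And>i. i < N \<Longrightarrow> x i = y i) \<Longrightarrow> hpoly N k c x = hpoly N k c y"
  unfolding hpoly_def by (intro sum.cong refl) (metis monom_val_cong)

lemma monom_val_scale: "a \<in> mindex N k \<Longrightarrow> monom_val N a (\<lambda>i. t * x i) = t ^ k * monom_val N a x"
  by (simp add: monom_val_def mindex_def power_mult_distrib prod.distrib power_sum[symmetric])

lemma hpoly_scale: "hpoly N k c (\<lambda>i. t * x i) = t ^ k * hpoly N k c x"
  unfolding hpoly_def by (simp add: monom_val_scale sum_distrib_left algebra_simps cong: sum.cong)

lemma hpoly_add: "hpoly N k (\<lambda>a. c a + d a) x = hpoly N k c x + hpoly N k d x"
  by (simp add: hpoly_def algebra_simps sum.distrib)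

lemma hpoly_smult: "hpoly N k (\<lambda>a. t * c a) x = t * hpoly N k c x"
  by (simp add: hpoly_def algebra_simps sum_distrib_left)

lemma hpoly_zero[simp]: "hpoly N k (\<lambda>a. 0) x = 0"
  by (simp add: hpoly_def)

lemma hpoly_div: "hpoly N k (\<lambda>a. c a / t) x = hpoly N k c x / t"
  by (simp add: hpoly_def sum_divide_distrib)

lemma monom_val_upd_factor:
  assumes "i < N"
  shows "monom_val N (a(i := m)) x = x i ^ m * (\<Prod>j\<in>{..<N}-{i}. x j ^ a j)"
proof -
  have "(\<Prod>j\<in>{..<N}-{i}. x j ^ (a(i := m)) j) = (\<Prod>j\<in>{..<N}-{i}. x j ^ a j)"
    by (intro prod.cong) auto
  then show ?thesis using assms by (simp add: monom_val_def prod.remove)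
qed

lemma monom_val_add2:
  assumes "i < N"
  shows "monom_val N (b(i := b i + 2)) x = (x i)^2 * monom_val N b x"
  using monom_val_upd_factor[OF assms, of b "b i + 2" x] monom_val_upd_factor[OF assms, of b "b i" x]
  by (simp add: power_add power2_eq_square algebra_simps)

text \<open>A polynomial in x_0..x_N is sum_m x_N^m * (coefficient slice m), each slice being a
  polynomial in x_0..x_(N-1).\<close>

definition coeff_slice :: "nat \<Rightarrow> nat \<Rightarrow> ((nat\<Rightarrow>nat)\<Rightarrow>real) \<Rightarrow> ((nat\<Rightarrow>nat)\<Rightarrow>real)" where
  "coeff_slice N m c = (\<lambda>a. if a N = 0 then c (a(N := m)) else 0)"

lemma monom_val_Suc: "monom_val (Suc N) a x = monom_val N a x * x N ^ a N"
  by (simp add: monom_val_def)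

lemma monom_val_upd_N: "monom_val N (a(N := m)) x = monom_val N a x"
  unfolding monom_val_def by (rule prod.cong) auto

lemma sum_upd_N: "(\<Sum>i<(N::nat). (a(N:=m)) i) = (\<Sum>i<N. (a i::nat))"
  by (rule sum.cong[OF refl]) auto

lemma mindex_Suc_upd: "b(N := x) \<in> mindex (Suc N) k \<longleftrightarrow> (\<forall>i>N. b i = 0) \<and> (\<Sum>i<N. b i) + x = k"
proof -
  have "(\<forall>i\<ge>Suc N. (b(N := x)) i = 0) \<longleftrightarrow> (\<forall>i>N. b i = 0)" by auto
  then show ?thesis by (simp add: mindex_def sum_upd_N)
qed

lemma mindex_Suc_self: "b \<in> mindex (Suc N) k \<longleftrightarrow> (\<forall>i>N. b i = 0) \<and> (\<Sum>i<N. b i) + b N = k"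
  using mindex_Suc_upd[of b N "b N" k] by simp

lemma mindex_N_iff: "b \<in> mindex N k \<longleftrightarrow> b \<in> mindex (Suc N) k \<and> b N = 0"
proof
  assume "b \<in> mindex N k"
  then show "b \<in> mindex (Suc N) k \<and> b N = 0" by (auto simp: mindex_Suc_self mindex_def)
next
  assume b: "b \<in> mindex (Suc N) k \<and> b N = 0"
  then have "\<forall>i\<ge>N. b i = 0" by (auto simp: mindex_Suc_self) (metis le_neq_implies_less)
  then show "b \<in> mindex N k" using b by (auto simp: mindex_Suc_self mindex_def)
qed

lemma hpoly_slice:
  "hpoly (Suc N) k c x = (\<Sum>m\<le>k. x N ^ m * hpoly N (k - m) (coeff_slice N m c) x)"
proof -
  have "(\<Sum>m\<le>k. x N ^ m * hpoly N (k - m) (coeff_slice N m c) x)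
      = (\<Sum>m\<le>k. \<Sum>b\<in>mindex N (k - m). x N ^ m * (coeff_slice N m c b * monom_val N b x))"
    by (simp add: hpoly_def sum_distrib_left)
  also have "\<dots> = (\<Sum>(m,b)\<in>Sigma {..k} (\<lambda>m. mindex N (k - m)).
                     x N ^ m * (coeff_slice N m c b * monom_val N b x))"
    by (rule sum.Sigma) (auto simp: finite_mindex)
  also have "\<dots> = (\<Sum>a\<in>mindex (Suc N) k. c a * monom_val (Suc N) a x)"
  proof (rule sum.reindex_bij_witness[where i="\<lambda>a. (a N, a(N:=0))" and j="\<lambda>(m,b). b(N:=m)"])
    fix a assume a: "a \<in> mindex (Suc N) k"
    show "(\<lambda>(m, b). b(N := m)) (a N, a(N := 0)) = a" by auto
    show "(a N, a(N := 0)) \<in> Sigma {..k} (\<lambda>m. mindex N (k - m))"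
      using a by (auto simp: mindex_def sum_upd_N)
  next
    fix mb assume mb: "mb \<in> Sigma {..k} (\<lambda>m. mindex N (k - m))"
    obtain m b where mbd[simp]: "mb = (m,b)" by (cases mb)
    from mb have m: "m \<le> k" and b: "b \<in> mindex N (k - m)" by auto
    have bN: "b N = 0" using b by (simp add: mindex_def)
    show "((case mb of (m, b) \<Rightarrow> b(N := m)) N, (case mb of (m, b) \<Rightarrow> b(N := m))(N := 0)) = mb"
      using bN by (auto simp: fun_eq_iff)
    show "(case mb of (m, b) \<Rightarrow> b(N := m)) \<in> mindex (Suc N) k"
      using b m by (auto simp: mindex_Suc_upd mindex_def)
    show "c (case mb of (m, b) \<Rightarrow> b(N := m)) * monom_val (Suc N) (case mb of (m, b) \<Rightarrow> b(N := m)) x =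
      (case mb of (m, b) \<Rightarrow> x N ^ m * (coeff_slice N m c b * monom_val N b x))"
      using bN by (simp add: coeff_slice_def monom_val_Suc monom_val_upd_N)
  qed
  finally show ?thesis by (simp add: hpoly_def)
qed

lemma coeff_slice_hom:
  assumes "hom_poly_coeffs (Suc N) k c"
  shows "hom_poly_coeffs N (k - m) (coeff_slice N m c)"
  unfolding hom_poly_coeffs_iff
proof (intro allI impI)
  fix b assume "coeff_slice N m c b \<noteq> 0"
  then have bN: "b N = 0" and "c (b(N:=m)) \<noteq> 0" by (auto simp: coeff_slice_def split: if_splits)
  then have "b(N:=m) \<in> mindex (Suc N) k" using assms by (auto simp: hom_poly_coeffs_iff)
  then have "(\<forall>i>N. b i = 0) \<and> (\<Sum>i<N. b i) + m = k" by (simp add: mindex_Suc_upd)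
  then show "b \<in> mindex N (k - m)" using bN by (auto simp: mindex_def le_less)
qed

lemma coeff_slice_big:
  assumes "hom_poly_coeffs (Suc N) k c" "k < m"
  shows "coeff_slice N m c = (\<lambda>_. 0)"
proof
  fix b
  have "b(N:=m) \<notin> mindex (Suc N) k" using assms(2) by (auto simp: mindex_Suc_upd)
  then show "coeff_slice N m c b = 0"
    using hom_poly_coeffs_zero[OF assms(1)] by (simp add: coeff_slice_def)
qed

lemma coeff_via_slice: "c a = coeff_slice N (a N) c (a(N:=0))"
  by (simp add: coeff_slice_def)

lemma polyfun_coeffs_zero:
  fixes S :: "nat \<Rightarrow> real"
  assumes "\<And>t. (\<Sum>m\<le>k. t ^ m * S m) = 0"
  shows "m \<le> k \<Longrightarrow> S m = 0"
  using polyfun_eq_0[of S k] assms by (auto simp: mult.commute)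

lemma hpoly_eq_0_coeffs:
  "hom_poly_coeffs N k c \<Longrightarrow> (\<And>x. hpoly N k c x = 0) \<Longrightarrow> c = (\<lambda>_. 0)"
proof (induction N arbitrary: k c)
  case 0
  show ?case
  proof
    fix a
    show "c a = 0"
    proof (cases "a \<in> mindex 0 k")
      case True
      then have k: "k = 0" and a: "a = (\<lambda>_. 0)" by (auto simp: mindex_0 split: if_splits)
      have "hpoly 0 k c (\<lambda>_. 0) = c a" by (simp add: hpoly_def k a monom_val_def mindex_0)
      then show ?thesis using "0.prems"(2) by simp
    qed (use "0.prems"(1) hom_poly_coeffs_zero in auto)
  qed
next
  case (Suc N)
  have slice_0: "coeff_slice N m c = (\<lambda>_. 0)" if m: "m \<le> k" for m
  proof (rule Suc.IH)
    show "hom_poly_coeffs N (k - m) (coeff_slice N m c)" by (rule coeff_slice_hom[OF Suc.prems(1)])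
    fix x
    have "(\<Sum>m\<le>k. t ^ m * hpoly N (k - m) (coeff_slice N m c) x) = 0" for t
    proof -
      have "hpoly (Suc N) k c (x(N:=t)) = 0" by (rule Suc.prems(2))
      moreover have "hpoly N (k - m) (coeff_slice N m c) (x(N:=t)) = hpoly N (k - m) (coeff_slice N m c) x"
        for m by (rule hpoly_cong) auto
      ultimately show ?thesis by (simp add: hpoly_slice)
    qed
    from polyfun_coeffs_zero[OF this m] show "hpoly N (k - m) (coeff_slice N m c) x = 0" .
  qed
  show ?case
  proof
    fix a
    show "c a = 0"
      using slice_0[of "a N"] coeff_slice_big[OF Suc.prems(1), of "a N"] coeff_via_slice[of c a N]
      by (cases "a N \<le> k") (auto simp: fun_eq_iff)
  qed
qed

text \<open>Every point is a multiple of a point on the sphere, so homogeneous polynomials are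
  determined by their values there.\<close>

lemma sphere_decomp:
  assumes "0 < N"
  shows "\<exists>r y. y \<in> sphere_pts N \<and> (\<forall>i<N. x i = r * y i)"
proof (cases "(\<Sum>i<N. (x i)^2) = 0")
  case True
  then have "\<forall>i<N. x i = 0"
    by (subst (asm) sum_nonneg_eq_0_iff) auto
  moreover have "(\<lambda>i. if i = 0 then 1 else 0::real) \<in> sphere_pts N"
  proof -
    have "(\<Sum>i<N. (if i = 0 then 1 else 0::real)^2) = (\<Sum>i<N. (if i = 0 then 1 else 0::real))"
      by (intro sum.cong) auto
    then show ?thesis using assms by (simp add: sphere_pts_def)
  qed
  ultimately show ?thesis by (intro exI[of _ 0] exI[of _ "\<lambda>i. if i = 0 then 1 else 0::real"]) auto
next
  case False
  define s where "s = (\<Sum>i<N. (x i)^2)"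
  have s: "s > 0" using False by (simp add: s_def sum_nonneg order_le_neq_trans)
  define y where "y = (\<lambda>i. if i < N then x i / sqrt s else 0)"
  have "(\<Sum>i<N. (y i)^2) = (\<Sum>i<N. (x i)^2 / s)"
    using s by (intro sum.cong refl) (simp add: y_def power_divide)
  also have "\<dots> = 1" using s by (simp add: sum_divide_distrib[symmetric] s_def)
  finally have "y \<in> sphere_pts N" by (simp add: sphere_pts_def y_def)
  moreover have "\<forall>i<N. x i = sqrt s * y i" using s by (simp add: y_def)
  ultimately show ?thesis by blast
qed

lemma hpoly_sphere_vanish:
  assumes "0 < N" "\<And>x. x \<in> sphere_pts N \<Longrightarrow> hpoly N k c x = 0"
  shows "hpoly N k c x = 0"
proof -
  obtain r y where y: "y \<in> sphere_pts N" "\<forall>i<N. x i = r * y i"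
    using sphere_decomp[OF assms(1)] by blast
  have "hpoly N k c x = hpoly N k c (\<lambda>i. r * y i)" using y by (intro hpoly_cong) auto
  also have "\<dots> = 0" using assms(2)[OF y(1)] by (simp add: hpoly_scale)
  finally show ?thesis .
qed

section \<open>The generator g\<close>

definition rot_angle :: "nat \<Rightarrow> int list \<Rightarrow> nat \<Rightarrow> real" where
  "rot_angle q p j = 2 * pi * real_of_int (p ! j) / real q"

lemma lens_gen_even:
  "j < length p \<Longrightarrow>
   lens_gen q p x (2*j) = cos (rot_angle q p j) * x (2*j) + sin (rot_angle q p j) * x (Suc (2*j))"
  by (simp add: lens_gen_def rot_angle_def Let_def)

lemma lens_gen_odd:
  "j < length p \<Longrightarrow>
   lens_gen q p x (Suc (2*j)) = - sin (rot_angle q p j) * x (2*j) + cos (rot_angle q p j) * x (Suc (2*j))"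
  by (simp add: lens_gen_def rot_angle_def Let_def)

lemma lens_gen_high: "2 * length p \<le> i \<Longrightarrow> lens_gen q p x i = x i"
  by (auto simp: lens_gen_def)

lemma lens_gen_coord_cases:
  obtains j where "j < length p" "i = 2*j"
  | j where "j < length p" "i = Suc (2*j)"
  | "2 * length p \<le> i"
proof (cases "2 * length p \<le> i")
  case False
  obtain j where "i = 2*j \<or> i = Suc (2*j)" by (metis oddE evenE Suc_eq_plus1)
  then show ?thesis using False that(1,2) by fastforce
qed (rule that(3))

lemma lens_gen_lin:
  "lens_gen q p (\<lambda>i. a * x i + b * y i) = (\<lambda>i. a * lens_gen q p x i + b * lens_gen q p y i)"
  by (auto simp: lens_gen_def Let_def fun_eq_iff algebra_simps)

lemma lens_gen_scale: "lens_gen q p (\<lambda>i. t * x i) = (\<lambda>i. t * lens_gen q p x i)"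
  by (auto simp: lens_gen_def Let_def fun_eq_iff algebra_simps)

lemma lens_gen_cong:
  assumes "\<And>i. i < N \<Longrightarrow> x i = y i" "2 * length p \<le> N" "i < N"
  shows "lens_gen q p x i = lens_gen q p y i"
  using assms by (cases i rule: lens_gen_coord_cases[of p])
    (simp_all add: lens_gen_even lens_gen_odd lens_gen_high)

text \<open>g fixes the coordinates x_i with i >= 2n, so it commutes with changing one of them.\<close>

lemma lens_gen_upd:
  assumes "2 * length p \<le> N"
  shows "lens_gen q p (x(N:=t)) = (lens_gen q p x)(N := t)"
proof
  fix i
  show "lens_gen q p (x(N := t)) i = ((lens_gen q p x)(N := t)) i"
    using assms by (cases i rule: lens_gen_coord_cases[of p])
      (simp_all add: lens_gen_even lens_gen_odd lens_gen_high)
qed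

lemma sum_pairs: "(\<Sum>i<2*n. f i) = (\<Sum>j<n. f (2*j) + f (2*j+1))" for f :: "nat \<Rightarrow> 'a::comm_monoid_add"
  by (induction n) (simp_all add: algebra_simps)

lemma sum_blocks:
  fixes f :: "nat \<Rightarrow> 'a::comm_monoid_add"
  assumes "2 * n \<le> N"
  shows "(\<Sum>i<N. f i) = (\<Sum>j<n. f (2*j) + f (2*j+1)) + (\<Sum>i\<in>{2*n..<N}. f i)"
  using sum.atLeastLessThan_concat[of 0 "2*n" N f] assms by (simp add: atLeast0LessThan sum_pairs)

lemma lens_gen_norm:
  assumes "2 * length p \<le> N"
  shows "(\<Sum>i<N. (lens_gen q p x i)^2) = (\<Sum>i<N. (x i)^2)"
proof -
  have block: "(lens_gen q p x (2*j))^2 + (lens_gen q p x (Suc (2*j)))^2 = (x (2*j))^2 + (x (Suc (2*j)))^2"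
    if "j < length p" for j
  proof -
    let ?t = "rot_angle q p j"
    have "(lens_gen q p x (2*j))^2 + (lens_gen q p x (Suc (2*j)))^2
        = ((sin ?t)^2 + (cos ?t)^2) * ((x (2*j))^2 + (x (Suc (2*j)))^2)"
      unfolding lens_gen_even[OF that] lens_gen_odd[OF that] power2_eq_square by algebra
    then show ?thesis by simp
  qed
  show ?thesis
    unfolding sum_blocks[OF assms, of "\<lambda>i. (lens_gen q p x i)^2"] sum_blocks[OF assms, of "\<lambda>i. (x i)^2"]
    by (simp add: block lens_gen_high)
qed

lemma lens_gen_sphere:
  assumes "2 * length p \<le> N" "x \<in> sphere_pts N"
  shows "lens_gen q p x \<in> sphere_pts N"
  using assms lens_gen_norm[OF assms(1), of q x] by (auto simp: sphere_pts_def lens_gen_high)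

lemma lens_gen_pow_sphere:
  assumes N: "2 * length p \<le> N" "x \<in> sphere_pts N"
  shows "(lens_gen q p ^^ m) x \<in> sphere_pts N"
  by (induction m) (auto simp: assms lens_gen_sphere[OF N(1)])

definition g_inv :: "nat \<Rightarrow> int list \<Rightarrow> nat \<Rightarrow> nat \<Rightarrow> ((nat\<Rightarrow>nat)\<Rightarrow>real) \<Rightarrow> bool" where
  "g_inv q p N d v \<longleftrightarrow> (\<forall>x. hpoly N d v (lens_gen q p x) = hpoly N d v x)"

lemma g_inv_pow:
  assumes "g_inv q p N k c"
  shows "hpoly N k c ((lens_gen q p ^^ m) x) = hpoly N k c x"
  using assms by (induction m) (auto simp: g_inv_def)

text \<open>Invariance on the sphere implies invariance everywhere, by homogeneity and linearity of g.\<close>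

lemma g_inv_from_sphere:
  assumes "0 < N" "2 * length p \<le> N"
    and "\<And>x. x \<in> sphere_pts N \<Longrightarrow> hpoly N k c (lens_gen q p x) = hpoly N k c x"
  shows "g_inv q p N k c"
  unfolding g_inv_def
proof
  fix x
  obtain r y where y: "y \<in> sphere_pts N" "\<forall>i<N. x i = r * y i"
    using sphere_decomp[OF assms(1)] by blast
  have "hpoly N k c (lens_gen q p x) = hpoly N k c (lens_gen q p (\<lambda>i. r * y i))"
    using y assms(2) by (intro hpoly_cong lens_gen_cong) auto
  also have "\<dots> = r ^ k * hpoly N k c (lens_gen q p y)" by (simp add: lens_gen_scale hpoly_scale)
  also have "\<dots> = r ^ k * hpoly N k c y" using assms(3)[OF y(1)] by simp
  also have "\<dots> = hpoly N k c (\<lambda>i. r * y i)" by (simp add: hpoly_scale)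
  also have "\<dots> = hpoly N k c x" using y by (intro hpoly_cong) auto
  finally show "hpoly N k c (lens_gen q p x) = hpoly N k c x" .
qed

section \<open>Dimensions of subspaces of infinite-dimensional spaces\<close>

text \<open>The library proves the following facts only for finite-dimensional ambient spaces; the
  coefficient spaces used here are infinite-dimensional, but all subspaces of interest lie in
  the span of a finite set, which is all the arguments need.\<close>

context vector_space begin

lemma span_disjoint_zero:
  assumes B: "independent B" and "A1 \<subseteq> B" "A2 \<subseteq> B" "A1 \<inter> A2 = {}"
    and x: "x \<in> span A1" "x \<in> span A2"
  shows "x = 0"
proof -
  have r1: "representation B x = representation A1 x"
    by (rule representation_extend) (use assms in auto)
  have r2: "representation B x = representation A2 x"
    by (rule representation_extend) (use assms in auto)
  have z: "representation B x = (\<lambda>b. 0)"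
  proof
    fix b show "representation B x b = 0"
    proof (rule ccontr)
      assume h: "representation B x b \<noteq> 0"
      then have "b \<in> A1" using r1 representation_ne_zero[of A1 x b] by simp
      moreover have "b \<in> A2" using h r2 representation_ne_zero[of A2 x b] by simp
      ultimately show False using assms(4) by auto
    qed
  qed
  have "x \<in> span B" using assms span_mono by blast
  then show ?thesis using sum_nonzero_representation_eq[OF B, of x] z by simp
qed

lemma subspace_eq_dim:
  assumes A: "subspace A" and V: "subspace V" and AV: "A \<subseteq> V" and F: "V \<subseteq> span F" "finite F"
    and d: "dim A = dim V"
  shows "A = V"
proof -
  obtain BA where BA: "BA \<subseteq> A" "independent BA" "A \<subseteq> span BA" "card BA = dim A"
    using basis_exists by blast
  obtain BV where BV: "BV \<subseteq> V" "independent BV" "V \<subseteq> span BV" "card BV = dim V"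
    using basis_exists by blast
  have fBV: "finite BV" using independent_span_bound[OF F(2) BV(2)] BV(1) F(1) by auto
  have fBA: "finite BA" using independent_span_bound[OF F(2) BA(2)] BA(1) AV F(1) by auto
  have "V \<subseteq> A"
  proof
    fix x assume xV: "x \<in> V"
    show "x \<in> A"
    proof (rule ccontr)
      assume xA: "x \<notin> A"
      have "span BA \<subseteq> A" using BA(1) A by (simp add: span_minimal)
      then have "x \<notin> span BA" using xA by auto
      then have ind: "independent (insert x BA)" using BA(2) by (rule independent_insertI)
      have "insert x BA \<subseteq> span BV" using xV BA(1) AV BV(3) by auto
      then have "card (insert x BA) \<le> card BV" using independent_span_bound[OF fBV ind] by auto
      moreover have "x \<notin> BA" using xA BA(1) by auto
      ultimately show False using fBA BA(4) BV(4) d by simp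
    qed
  qed
  then show ?thesis using AV by auto
qed

end

context vector_space_pair begin

text \<open>The proof of the library's dim_image_eq, which is stated only in the finite-dimensional
  locale but does not use finite dimension.\<close>

lemma dim_image_eq_general:
  assumes lf: "Vector_Spaces.linear s1 s2 f"
    and fi: "inj_on f (vs1.span S)"
  shows "vs2.dim (f ` S) = vs1.dim S"
proof -
  interpret lf: Vector_Spaces.linear s1 s2 f by fact
  obtain B where B: "B \<subseteq> S" "vs1.independent B" "S \<subseteq> vs1.span B" "card B = vs1.dim S"
    using vs1.basis_exists[of S] by auto
  then have "vs1.span S = vs1.span B"
    using vs1.span_mono[of B S] vs1.span_mono[of S "vs1.span B"] vs1.span_span[of B] by auto
  moreover have "card (f ` B) = card B"
    using assms card_image[of f B] inj_on_subset[of f "vs1.span S" B] B vs1.span_superset by auto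
  moreover have "(f ` B) \<subseteq> (f ` S)"
    using B by auto
  ultimately show ?thesis
    by (metis B(2) B(4) fi lf.dependent_inj_imageD lf.span_image vs2.dim_eq_card_independent vs2.dim_span)
qed

text \<open>Rank-nullity for a linear map on a finitely spanned subspace: extend a basis of the
  kernel to a basis of S; the new vectors map injectively onto a spanning set of the image.\<close>

lemma rank_nullity_subspace:
  assumes lf: "Vector_Spaces.linear s1 s2 f" and S: "vs1.subspace S"
    and F: "S \<subseteq> vs1.span F" "finite F"
  shows "vs1.dim S = vs1.dim {x\<in>S. f x = 0} + vs2.dim (f ` S)"
proof -
  interpret lf: Vector_Spaces.linear s1 s2 f by fact
  let ?K = "{x\<in>S. f x = 0}"
  obtain BK where BK: "BK \<subseteq> ?K" "vs1.independent BK" "?K \<subseteq> vs1.span BK" "card BK = vs1.dim ?K"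
    using vs1.basis_exists by blast
  obtain B where B: "BK \<subseteq> B" "B \<subseteq> S" "vs1.independent B" "S \<subseteq> vs1.span B"
    using vs1.maximal_independent_subset_extend[of BK S] BK by auto
  have fB: "finite B" using vs1.independent_span_bound[OF F(2) B(3)] B(2) F(1) by auto
  have cB: "card B = vs1.dim S" using vs1.basis_card_eq_dim[OF B(2) B(4) B(3)] .
  define C where "C = B - BK"
  have cBC: "card B = card BK + card C"
    using fB B(1) by (simp add: C_def card_Diff_subset finite_subset card_mono)
  have spanB: "vs1.span B = S" using B(2,4) S vs1.span_minimal by blast
  have spanC: "vs1.span C \<subseteq> S" using spanB vs1.span_mono[of C B] by (auto simp: C_def)
  have inj: "inj_on f (vs1.span C)"
  proof (subst lf.inj_on_iff_eq_0)
    show "vs1.subspace (vs1.span C)" by simp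
    show "\<forall>x\<in>vs1.span C. f x = 0 \<longrightarrow> x = 0"
    proof (intro ballI impI)
      fix x assume xC: "x \<in> vs1.span C" and fx: "f x = 0"
      then have "x \<in> ?K" using spanC by auto
      then have "x \<in> vs1.span BK" using BK(3) by auto
      then show "x = 0" using vs1.span_disjoint_zero[OF B(3), of BK C x] xC B(1)
        by (auto simp: C_def)
    qed
  qed
  have fBK0: "f ` BK \<subseteq> {0}" using BK(1) by auto
  have "f ` S = vs2.span (f ` B)" using spanB lf.span_image by metis
  also have "f ` B = f ` BK \<union> f ` C" using B(1) by (auto simp: C_def)
  also have "vs2.span (f ` BK \<union> f ` C) = vs2.span (f ` C)"
  proof -
    have "vs2.span (f ` BK \<union> f ` C) \<subseteq> vs2.span (insert 0 (f ` C))"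
      using fBK0 by (intro vs2.span_mono) auto
    then show ?thesis using vs2.span_mono[of "f ` C" "f ` BK \<union> f ` C"] by auto
  qed
  finally have "vs2.dim (f ` S) = vs2.dim (f ` C)" by simp
  also have "\<dots> = vs1.dim C" using dim_image_eq_general[OF lf inj] .
  also have "\<dots> = card C"
    using vs1.dim_eq_card_independent vs1.independent_mono[OF B(3)] by (auto simp: C_def)
  finally show ?thesis using cB cBC BK(4) by simp
qed

end

lemma vector_space_fun: "vector_space (\<lambda>(c::real) (f::'a\<Rightarrow>real) x. c * f x)"
  unfolding vector_space_def module_def by (auto simp: fun_eq_iff algebra_simps)

lemma vector_space_pair_fun:
  "vector_space_pair (\<lambda>(c::real) (f::'a\<Rightarrow>real) x. c * f x) (\<lambda>(c::real) (f::'b\<Rightarrow>real) x. c * f x)"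
  unfolding vector_space_pair_def using vector_space_fun vector_space_fun by auto

interpretation cf: vector_space "\<lambda>(c::real) (f::(nat\<Rightarrow>nat)\<Rightarrow>real) x. c * f x"
  by (rule vector_space_fun)

interpretation cfp: vector_space_pair "\<lambda>(c::real) (f::(nat\<Rightarrow>nat)\<Rightarrow>real) x. c * f x"
  "\<lambda>(c::real) (f::(nat\<Rightarrow>nat)\<Rightarrow>real) x. c * f x"
  by (rule vector_space_pair_fun)

interpretation rp: vector_space_pair "\<lambda>(c::real) (f::(nat\<Rightarrow>nat)\<Rightarrow>real) x. c * f x"
  "\<lambda>(c::real) (f::(nat\<Rightarrow>real)\<Rightarrow>real) x. c * f x"
  by (rule vector_space_pair_fun)

definition basis_coeff :: "(nat \<Rightarrow> nat) \<Rightarrow> (nat \<Rightarrow> nat) \<Rightarrow> real" where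
  "basis_coeff a = (\<lambda>b. if b = a then 1 else 0)"

lemma sum_fun_apply: "finite A \<Longrightarrow> sum f A x = (\<Sum>a\<in>A. f a x)"
  by (induction A rule: finite_induct) auto

lemma hom_poly_coeffs_span:
  assumes "hom_poly_coeffs N d v"
  shows "v \<in> cf.span (basis_coeff ` mindex N d)"
proof -
  have "v = (\<Sum>a\<in>mindex N d. (\<lambda>x. v a * basis_coeff a x))"
  proof
    fix b
    have "(\<Sum>a\<in>mindex N d. (\<lambda>x. v a * basis_coeff a x)) b = (\<Sum>a\<in>mindex N d. v a * basis_coeff a b)"
      by (simp add: sum_fun_apply finite_mindex)
    also have "\<dots> = (if b \<in> mindex N d then v b else 0)"
      by (simp add: basis_coeff_def if_distrib finite_mindex cong: if_cong)
    also have "\<dots> = v b" using hom_poly_coeffs_zero[OF assms] by auto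
    finally show "v b = (\<Sum>a\<in>mindex N d. (\<lambda>x. v a * basis_coeff a x)) b" by simp
  qed
  also have "\<dots> \<in> cf.span (basis_coeff ` mindex N d)"
    by (intro cf.span_sum cf.span_scale cf.span_base) auto
  finally show ?thesis .
qed

section \<open>The Laplacian commutes with g\<close>

text \<open>The coefficient of r^2 of a polynomial function of r (0 if there is none).\<close>

definition coeff2 :: "(real \<Rightarrow> real) \<Rightarrow> real" where
  "coeff2 \<phi> = (THE b. \<exists>a n. (\<forall>r. \<phi> r = (\<Sum>m\<le>n. a m * r^m)) \<and> b = (if 2 \<le> n then a 2 else 0))"

lemma sum_pow_extend:
  fixes a :: "nat \<Rightarrow> real"
  assumes "n \<le> M"
  shows "(\<Sum>m\<le>M. (if m \<le> n then a m else 0) * r^m) = (\<Sum>m\<le>n. a m * r^m)"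
proof -
  have "(\<Sum>m\<le>M. (if m \<le> n then a m else 0) * r^m) = (\<Sum>m\<le>M. if m \<in> {..n} then a m * r^m else 0)"
    by (intro sum.cong) auto
  also have "\<dots> = (\<Sum>m\<in>{..M} \<inter> {..n}. a m * r^m)" by (rule sum.inter_restrict[symmetric]) simp
  also have "{..M} \<inter> {..n} = {..n}" using assms by auto
  finally show ?thesis .
qed

text \<open>Coefficients of a polynomial function are unique, so coeff2 is well defined.\<close>

lemma coeff2_unique:
  fixes a a' :: "nat \<Rightarrow> real"
  assumes "\<forall>r. \<phi> r = (\<Sum>m\<le>n. a m * r^m)" "\<forall>r. \<phi> r = (\<Sum>m\<le>n'. a' m * r^m)"
  shows "(if 2 \<le> n then a 2 else 0) = (if 2 \<le> n' then a' 2 else 0)"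
proof -
  define M where "M = max n n'"
  define e where "e m = (if m \<le> n then a m else 0) - (if m \<le> n' then a' m else 0)" for m
  have "(\<Sum>m\<le>M. e m * r^m) = 0" for r
  proof -
    have "(\<Sum>m\<le>M. e m * r^m) = (\<Sum>m\<le>M. (if m \<le> n then a m else 0) * r^m)
        - (\<Sum>m\<le>M. (if m \<le> n' then a' m else 0) * r^m)"
      by (simp add: e_def algebra_simps sum_subtractf)
    also have "\<dots> = \<phi> r - \<phi> r"
      using assms sum_pow_extend[of n M a r] sum_pow_extend[of n' M a' r] by (simp add: M_def)
    finally show ?thesis by simp
  qed
  then have "\<forall>m\<le>M. e m = 0" using polyfun_eq_0[of e M] by (simp add: mult.commute)
  then show ?thesis
    by (cases "2 \<le> M") (auto simp: e_def M_def split: if_splits)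
qed

lemma coeff2_eq:
  fixes a :: "nat \<Rightarrow> real"
  assumes "\<And>r. \<phi> r = (\<Sum>m\<le>n. a m * r^m)"
  shows "coeff2 \<phi> = (if 2 \<le> n then a 2 else 0)"
  unfolding coeff2_def
proof (rule the_equality)
  show "\<exists>a' n'. (\<forall>r. \<phi> r = (\<Sum>m\<le>n'. a' m * r ^ m)) \<and> (if 2 \<le> n then a 2 else 0) = (if 2 \<le> n' then a' 2 else 0)"
    using assms by blast
  fix b assume "\<exists>a' n'. (\<forall>r. \<phi> r = (\<Sum>m\<le>n'. a' m * r ^ m)) \<and> b = (if 2 \<le> n' then a' 2 else 0)"
  then obtain a' n' where "\<forall>r. \<phi> r = (\<Sum>m\<le>n'. a' m * r ^ m)" "b = (if 2 \<le> n' then a' 2 else 0)"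
    by blast
  then show "b = (if 2 \<le> n then a 2 else 0)"
    using coeff2_unique[where \<phi>=\<phi> and n=n and a=a and n'=n' and a'=a'] assms by auto
qed

definition unit_vec :: "nat \<Rightarrow> nat \<Rightarrow> real" where "unit_vec i = (\<lambda>j. if j = i then 1 else 0)"

lemma binomial_extend:
  fixes y r :: real
  assumes "n \<le> K"
  shows "(y + r) ^ n = (\<Sum>m\<le>K. real (n choose m) * r ^ m * y ^ (n - m))"
proof -
  have "(y + r) ^ n = (\<Sum>m\<le>n. real (n choose m) * r ^ m * y ^ (n - m))"
    using binomial_ring[of r y n] by (simp add: add.commute)
  also have "\<dots> = (\<Sum>m\<le>K. real (n choose m) * r ^ m * y ^ (n - m))"
    using assms by (intro sum.mono_neutral_left) (auto simp: binomial_eq_0)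
  finally show ?thesis .
qed

lemma monom_val_coord:
  assumes "i < N"
  shows "monom_val N a (\<lambda>j. y j + r * unit_vec i j) = (y i + r) ^ a i * (\<Prod>j\<in>{..<N}-{i}. y j ^ a j)"
proof -
  have "monom_val N a (\<lambda>j. y j + r * unit_vec i j)
      = (y i + r) ^ a i * (\<Prod>j\<in>{..<N}-{i}. (y j + r * unit_vec i j) ^ a j)"
    using assms by (simp add: monom_val_def prod.remove unit_vec_def)
  also have "(\<Prod>j\<in>{..<N}-{i}. (y j + r * unit_vec i j) ^ a j) = (\<Prod>j\<in>{..<N}-{i}. y j ^ a j)"
    by (intro prod.cong) (auto simp: unit_vec_def)
  finally show ?thesis .
qed

lemma coeff2_coord:
  assumes "i < N"
  shows "coeff2 (\<lambda>r. hpoly N k c (\<lambda>j. y j + r * unit_vec i j)) =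
    (\<Sum>a\<in>mindex N k. c a * (real (a i choose 2) * y i ^ (a i - 2) * (\<Prod>j\<in>{..<N}-{i}. y j ^ a j)))"
proof -
  let ?P = "\<lambda>a. (\<Prod>j\<in>{..<N}-{i}. y j ^ a j)"
  define A where "A m = (\<Sum>a\<in>mindex N k. c a * (real (a i choose m) * y i ^ (a i - m) * ?P a))" for m
  have "hpoly N k c (\<lambda>j. y j + r * unit_vec i j) = (\<Sum>m\<le>k+2. A m * r^m)" for r
  proof -
    have "hpoly N k c (\<lambda>j. y j + r * unit_vec i j)
        = (\<Sum>a\<in>mindex N k. c a * ((\<Sum>m\<le>k+2. real (a i choose m) * r ^ m * y i ^ (a i - m)) * ?P a))"
      unfolding hpoly_def
    proof (intro sum.cong refl)
      fix a assume a: "a \<in> mindex N k"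
      have "a i \<le> k + 2" using mindex_le[OF a assms] by simp
      then show "c a * monom_val N a (\<lambda>j. y j + r * unit_vec i j)
          = c a * ((\<Sum>m\<le>k+2. real (a i choose m) * r ^ m * y i ^ (a i - m)) * ?P a)"
        by (simp add: monom_val_coord[OF assms] binomial_extend)
    qed
    also have "\<dots> = (\<Sum>a\<in>mindex N k. \<Sum>m\<le>k+2. c a * (real (a i choose m) * y i ^ (a i - m) * ?P a) * r ^ m)"
      by (intro sum.cong refl) (simp add: sum_distrib_left sum_distrib_right algebra_simps)
    also have "\<dots> = (\<Sum>m\<le>k+2. A m * r^m)"
      by (subst sum.swap) (simp add: A_def sum_distrib_right)
    finally show ?thesis .
  qed
  from coeff2_eq[where n="k+2" and a=A, OF this] show ?thesis by (simp add: A_def)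
qed

lemma two_choose_Suc_Suc: "2 * real (Suc (Suc n) choose 2) = real ((n + 2) * (n + 1))"
proof -
  have "2 * (Suc (Suc n) choose 2) = (n + 2) * (n + 1)"
    by (induction n) (simp_all add: numeral_2_eq_2)
  then show ?thesis by (metis of_nat_mult of_nat_numeral)
qed

lemma laplacian_term_coord:
  assumes i: "i < N"
  shows "(\<Sum>b\<in>mindex N d. real ((b i + 2) * (b i + 1)) * c (b(i := b i + 2)) * monom_val N b y)
       = 2 * (\<Sum>a\<in>mindex N (d+2). c a * (real (a i choose 2) * y i ^ (a i - 2) * (\<Prod>j\<in>{..<N}-{i}. y j ^ a j)))"
proof -
  define G where "G a = 2 * (c a * (real (a i choose 2) * y i ^ (a i - 2) * (\<Prod>j\<in>{..<N}-{i}. y j ^ a j)))"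
    for a
  have "(\<Sum>a\<in>mindex N (d+2). G a) = (\<Sum>a\<in>mindex N (d+2). if 2 \<le> a i then G a else 0)"
    by (intro sum.cong refl) (auto simp: G_def binomial_eq_0)
  also have "\<dots> = (\<Sum>b\<in>mindex N d. G (b(i := b i + 2)))" by (rule sum_mindex_shift2[OF i])
  also have "\<dots> = (\<Sum>b\<in>mindex N d. real ((b i + 2) * (b i + 1)) * c (b(i := b i + 2)) * monom_val N b y)"
  proof (intro sum.cong refl)
    fix b
    have M: "monom_val N b y = y i ^ b i * (\<Prod>j\<in>{..<N}-{i}. y j ^ b j)"
      using monom_val_upd_factor[OF i, of b "b i" y] by simp
    have P: "(\<Prod>j\<in>{..<N}-{i}. y j ^ (b(i := b i + 2)) j) = (\<Prod>j\<in>{..<N}-{i}. y j ^ b j)"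
      by (intro prod.cong) auto
    have "G (b(i := b i + 2)) = (2 * real (Suc (Suc (b i)) choose 2)) * c (b(i := b i + 2))
                                * (y i ^ b i * (\<Prod>j\<in>{..<N}-{i}. y j ^ b j))"
      unfolding G_def P by (simp add: mult_ac)
    then show "G (b(i := b i + 2)) = real ((b i + 2) * (b i + 1)) * c (b(i := b i + 2)) * monom_val N b y"
      unfolding two_choose_Suc_Suc M .
  qed
  finally show ?thesis by (simp add: G_def sum_distrib_left)
qed

lemma laplacian_coeff2:
  assumes "hom_poly_coeffs N k c"
  shows "hpoly N (k-2) (laplacian_coeffs N c) y
       = 2 * (\<Sum>i<N. coeff2 (\<lambda>r. hpoly N k c (\<lambda>j. y j + r * unit_vec i j)))"
proof (cases "k < 2")
  case True
  have "laplacian_coeffs N c b = 0" for b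
  proof -
    have "c (b(i := b i + 2)) = 0" if "i < N" for i
    proof (rule hom_poly_coeffs_zero[OF assms], rule notI)
      assume "b(i := b i + 2) \<in> mindex N k"
      from mindex_le[OF this that] True show False by simp
    qed
    then show ?thesis by (simp add: laplacian_coeffs_def)
  qed
  moreover have "coeff2 (\<lambda>r. hpoly N k c (\<lambda>j. y j + r * unit_vec i j)) = 0" if i: "i < N" for i
  proof -
    have "a i choose 2 = 0" if "a \<in> mindex N k" for a
      using mindex_le[OF that i] True by (simp add: binomial_eq_0)
    then show ?thesis unfolding coeff2_coord[OF i] by (intro sum.neutral) simp
  qed
  ultimately show ?thesis by (simp add: hpoly_def)
next
  case False
  then obtain d where k: "k = d + 2" by (metis add.commute le_Suc_ex not_less)
  have "hpoly N (k-2) (laplacian_coeffs N c) y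
      = (\<Sum>b\<in>mindex N d. \<Sum>i<N. real ((b i + 2) * (b i + 1)) * c (b(i := b i + 2)) * monom_val N b y)"
    by (simp add: hpoly_def k laplacian_coeffs_def sum_distrib_right)
  also have "\<dots> = (\<Sum>i<N. \<Sum>b\<in>mindex N d. real ((b i + 2) * (b i + 1)) * c (b(i := b i + 2)) * monom_val N b y)"
    by (rule sum.swap)
  also have "\<dots> = 2 * (\<Sum>i<N. coeff2 (\<lambda>r. hpoly N k c (\<lambda>j. y j + r * unit_vec i j)))"
    unfolding sum_distrib_left
  proof (intro sum.cong refl)
    fix i assume "i \<in> {..<N}"
    then have i: "i < N" by simp
    show "(\<Sum>b\<in>mindex N d. real ((b i + 2) * (b i + 1)) * c (b(i := b i + 2)) * monom_val N b y)
        = 2 * coeff2 (\<lambda>r. hpoly N k c (\<lambda>j. y j + r * unit_vec i j))"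
      unfolding coeff2_coord[OF i] k by (rule laplacian_term_coord[OF i])
  qed
  finally show ?thesis .
qed

definition eval2 :: "real poly poly \<Rightarrow> real \<Rightarrow> real \<Rightarrow> real" where
  "eval2 P s t = poly (poly P [:t:]) s"

lemma eval2_mult[simp]: "eval2 (P * Q) s t = eval2 P s t * eval2 Q s t"
  by (simp add: eval2_def)
lemma eval2_sum: "eval2 (sum f A) s t = (\<Sum>a\<in>A. eval2 (f a) s t)"
  by (simp add: eval2_def poly_sum)
lemma eval2_prod: "eval2 (prod f A) s t = (\<Prod>a\<in>A. eval2 (f a) s t)"
  by (simp add: eval2_def poly_prod)
lemma eval2_power[simp]: "eval2 (P ^ n) s t = eval2 P s t ^ n"
  by (simp add: eval2_def poly_power)
lemma eval2_smult[simp]: "eval2 (smult a P) s t = poly a s * eval2 P s t"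
  by (simp add: eval2_def)
lemma eval2_linear: "eval2 [: [:z, u:], [:w:] :] s t = z + s * u + t * w"
  by (simp add: eval2_def algebra_simps)

lemma poly_extend:
  fixes p :: "'a::comm_ring_1 poly"
  assumes "degree p \<le> D"
  shows "poly p x = (\<Sum>i\<le>D. coeff p i * x^i)"
  using assms by (subst poly_altdef) (rule sum.mono_neutral_left, auto simp: coeff_eq_0)

lemma eval2_expand:
  "\<exists>D\<ge>2. \<forall>s t. eval2 P s t = (\<Sum>l\<le>D. \<Sum>j\<le>D. coeff (coeff P l) j * s^j * t^l)"
proof -
  define D where "D = 2 + degree P + (\<Sum>l\<le>degree P. degree (coeff P l))"
  have dP: "degree P \<le> D" by (simp add: D_def)
  have dc: "degree (coeff P l) \<le> D" for l
  proof (cases "l \<le> degree P")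
    case True
    then have "degree (coeff P l) \<le> (\<Sum>l\<le>degree P. degree (coeff P l))"
      by (intro member_le_sum) auto
    then show ?thesis by (simp add: D_def)
  qed (simp add: coeff_eq_0)
  have "eval2 P s t = (\<Sum>l\<le>D. \<Sum>j\<le>D. coeff (coeff P l) j * s^j * t^l)" for s t
  proof -
    have "eval2 P s t = poly (\<Sum>l\<le>D. coeff P l * [:t:]^l) s"
      by (simp add: eval2_def poly_extend[OF dP])
    also have "\<dots> = (\<Sum>l\<le>D. poly (coeff P l) s * t^l)"
      by (simp add: poly_sum poly_power)
    also have "\<dots> = (\<Sum>l\<le>D. \<Sum>j\<le>D. coeff (coeff P l) j * s^j * t^l)"
      by (simp add: poly_extend[OF dc] sum_distrib_right)
    finally show ?thesis .
  qed
  then show ?thesis by (intro exI[of _ D]) (auto simp: D_def)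
qed

lemma hpoly_eval2: "\<exists>P. \<forall>s t. hpoly N k c (\<lambda>j. z j + s * u j + t * w j) = eval2 P s t"
proof -
  define P where "P = (\<Sum>a\<in>mindex N k. [:[:c a:]:] * (\<Prod>j<N. [: [:z j, u j:], [:w j:] :] ^ a j))"
  have "hpoly N k c (\<lambda>j. z j + s * u j + t * w j) = eval2 P s t" for s t
    by (simp add: P_def hpoly_def monom_val_def eval2_sum eval2_prod eval2_linear)
  then show ?thesis by blast
qed

lemma sum_regroup_degree:
  fixes X :: "nat \<Rightarrow> nat \<Rightarrow> real"
  shows "(\<Sum>l\<le>D. \<Sum>j\<le>D. X j l * r^(j+l))
       = (\<Sum>m\<le>2*D. (\<Sum>l\<le>D. \<Sum>j\<le>D. if j + l = m then X j l else 0) * r^m)"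
proof -
  have "(\<Sum>m\<le>2*D. (\<Sum>l\<le>D. \<Sum>j\<le>D. if j + l = m then X j l else 0) * r^m)
      = (\<Sum>m\<le>2*D. \<Sum>l\<le>D. \<Sum>j\<le>D. if j + l = m then X j l * r^(j+l) else 0)"
    unfolding sum_distrib_right by (intro sum.cong refl) auto
  also have "\<dots> = (\<Sum>l\<le>D. \<Sum>j\<le>D. \<Sum>m\<le>2*D. if j + l = m then X j l * r^(j+l) else 0)"
    by (simp add: sum.swap[of _ "{..2*D}"] sum.swap[of _ "{..D}" "{..2*D}"])
  also have "\<dots> = (\<Sum>l\<le>D. \<Sum>j\<le>D. X j l * r^(j+l))"
    by (intro sum.cong refl) (auto simp: sum.delta)
  finally show ?thesis by simp
qed

lemma sum_degree2:
  fixes X :: "nat \<Rightarrow> nat \<Rightarrow> real"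
  assumes "2 \<le> D"
  shows "(\<Sum>l\<le>D. \<Sum>j\<le>D. if j + l = 2 then X j l else 0) = X 2 0 + X 1 1 + X 0 2"
proof -
  have inner: "(\<Sum>j\<le>D. if j + l = 2 then X j l else 0) = (if l \<le> 2 then X (2 - l) l else 0)" for l
  proof (cases "l \<le> 2")
    case True
    then have "(\<Sum>j\<le>D. if j + l = 2 then X j l else 0) = (\<Sum>j\<le>D. if j = 2 - l then X j l else 0)"
      by (intro sum.cong) auto
    also have "\<dots> = X (2 - l) l" using True assms by (simp add: sum.delta)
    finally show ?thesis using True by simp
  qed simp
  have "(\<Sum>l\<le>D. \<Sum>j\<le>D. if j + l = 2 then X j l else 0) = (\<Sum>l\<le>D. if l \<le> 2 then X (2 - l) l else 0)"
    by (simp only: inner)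
  also have "\<dots> = (\<Sum>l\<le>2. X (2 - l) l)"
    using assms by (intro sum.mono_neutral_cong_right) auto
  also have "\<dots> = X 2 0 + X 1 1 + X 0 2"
    by (simp add: atMost_Suc numeral_2_eq_2)
  finally show ?thesis .
qed

lemma coeff2_quadratic:
  "\<exists>A B C. \<forall>\<alpha> \<beta>. coeff2 (\<lambda>r. hpoly N k c (\<lambda>j. z j + r * (\<alpha> * u j + \<beta> * w j)))
                 = A * \<alpha>^2 + B * \<alpha> * \<beta> + C * \<beta>^2"
proof -
  obtain P where P: "\<And>s t. hpoly N k c (\<lambda>j. z j + s * u j + t * w j) = eval2 P s t"
    using hpoly_eval2 by blast
  obtain D where D: "D \<ge> 2" "\<And>s t. eval2 P s t = (\<Sum>l\<le>D. \<Sum>j\<le>D. coeff (coeff P l) j * s^j * t^l)"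
    using eval2_expand by blast
  define A where "A j l = coeff (coeff P l) j" for j l
  have "coeff2 (\<lambda>r. hpoly N k c (\<lambda>j. z j + r * (\<alpha> * u j + \<beta> * w j)))
      = A 2 0 * \<alpha>^2 + A 1 1 * \<alpha> * \<beta> + A 0 2 * \<beta>^2" for \<alpha> \<beta>
  proof -
    define e where "e m = (\<Sum>l\<le>D. \<Sum>j\<le>D. if j + l = m then A j l * \<alpha>^j * \<beta>^l else 0)" for m
    have "hpoly N k c (\<lambda>j. z j + r * (\<alpha> * u j + \<beta> * w j)) = (\<Sum>m\<le>2*D. e m * r^m)" for r
    proof -
      have "hpoly N k c (\<lambda>j. z j + r * (\<alpha> * u j + \<beta> * w j))
          = hpoly N k c (\<lambda>j. z j + (r*\<alpha>) * u j + (r*\<beta>) * w j)"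
        by (simp add: algebra_simps)
      also have "\<dots> = (\<Sum>l\<le>D. \<Sum>j\<le>D. (A j l * \<alpha>^j * \<beta>^l) * r^(j+l))"
        unfolding P D(2) A_def
        by (intro sum.cong refl) (simp add: power_mult_distrib power_add algebra_simps)
      also have "\<dots> = (\<Sum>m\<le>2*D. e m * r^m)" unfolding e_def by (rule sum_regroup_degree)
      finally show ?thesis .
    qed
    from coeff2_eq[where n="2*D" and a=e, OF this] D(1)
    show ?thesis by (simp add: e_def sum_degree2 power2_eq_square)
  qed
  then show ?thesis by blast
qed

lemma coeff2_rotation:
  fixes cs sn :: real
  assumes cs: "cs^2 + sn^2 = 1"
  shows "coeff2 (\<lambda>r. hpoly N k c (\<lambda>j. z j + r * (cs * u j + (-sn) * w j)))
       + coeff2 (\<lambda>r. hpoly N k c (\<lambda>j. z j + r * (sn * u j + cs * w j)))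
       = coeff2 (\<lambda>r. hpoly N k c (\<lambda>j. z j + r * u j)) + coeff2 (\<lambda>r. hpoly N k c (\<lambda>j. z j + r * w j))"
proof -
  obtain A B C where Q: "\<And>\<alpha> \<beta>. coeff2 (\<lambda>r. hpoly N k c (\<lambda>j. z j + r * (\<alpha> * u j + \<beta> * w j)))
                            = A * \<alpha>^2 + B * \<alpha> * \<beta> + C * \<beta>^2"
    using coeff2_quadratic by blast
  have "coeff2 (\<lambda>r. hpoly N k c (\<lambda>j. z j + r * u j)) = A"
    using Q[of 1 0] by simp
  moreover have "coeff2 (\<lambda>r. hpoly N k c (\<lambda>j. z j + r * w j)) = C"
    using Q[of 0 1] by simp
  moreover have "A * cs^2 + B * cs * (-sn) + C * (-sn)^2 + (A * sn^2 + B * sn * cs + C * cs^2)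
               = (A + C) * (cs^2 + sn^2)"
    by (simp add: power2_eq_square ring_distribs)
  ultimately show ?thesis unfolding Q using cs by simp
qed

lemma lens_gen_unit_vec_high:
  assumes "2 * length p \<le> i"
  shows "lens_gen q p (unit_vec i) = unit_vec i"
proof
  fix m
  show "lens_gen q p (unit_vec i) m = unit_vec i m"
    using assms by (cases m rule: lens_gen_coord_cases[of p])
      (auto simp: lens_gen_even lens_gen_odd lens_gen_high unit_vec_def)
qed

lemma lens_gen_unit_vec_even:
  assumes "j < length p"
  shows "lens_gen q p (unit_vec (2*j))
       = (\<lambda>m. cos (rot_angle q p j) * unit_vec (2*j) m + (- sin (rot_angle q p j)) * unit_vec (Suc (2*j)) m)"
proof
  fix m
  show "lens_gen q p (unit_vec (2*j)) m
      = cos (rot_angle q p j) * unit_vec (2*j) m + (- sin (rot_angle q p j)) * unit_vec (Suc (2*j)) m"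
    using assms by (cases m rule: lens_gen_coord_cases[of p])
      (auto simp: lens_gen_even lens_gen_odd lens_gen_high unit_vec_def)
qed

lemma lens_gen_unit_vec_odd:
  assumes "j < length p"
  shows "lens_gen q p (unit_vec (Suc (2*j)))
       = (\<lambda>m. sin (rot_angle q p j) * unit_vec (2*j) m + cos (rot_angle q p j) * unit_vec (Suc (2*j)) m)"
proof
  fix m
  show "lens_gen q p (unit_vec (Suc (2*j))) m
      = sin (rot_angle q p j) * unit_vec (2*j) m + cos (rot_angle q p j) * unit_vec (Suc (2*j)) m"
    using assms by (cases m rule: lens_gen_coord_cases[of p])
      (auto simp: lens_gen_even lens_gen_odd lens_gen_high unit_vec_def)
qed

lemma sum_coeff2_lens_gen:
  assumes N: "2 * length p \<le> N"
  shows "(\<Sum>i<N. coeff2 (\<lambda>r. hpoly N k c (\<lambda>j. z j + r * lens_gen q p (unit_vec i) j)))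
       = (\<Sum>i<N. coeff2 (\<lambda>r. hpoly N k c (\<lambda>j. z j + r * unit_vec i j)))"
proof -
  let ?T = "\<lambda>v. coeff2 (\<lambda>r. hpoly N k c (\<lambda>j. z j + r * v j))"
  have block: "?T (lens_gen q p (unit_vec (2*j))) + ?T (lens_gen q p (unit_vec (Suc (2*j))))
             = ?T (unit_vec (2*j)) + ?T (unit_vec (Suc (2*j)))" if "j < length p" for j
    using coeff2_rotation[OF sin_cos_squared_add2, where u="unit_vec (2*j)" and w="unit_vec (Suc (2*j))"]
    unfolding lens_gen_unit_vec_even[OF that] lens_gen_unit_vec_odd[OF that] by simp
  show ?thesis
    unfolding sum_blocks[OF N, of "\<lambda>i. ?T (lens_gen q p (unit_vec i))"] sum_blocks[OF N, of "\<lambda>i. ?T (unit_vec i)"]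
    by (simp add: block lens_gen_unit_vec_high)
qed

lemma laplacian_g_inv:
  assumes N: "2 * length p \<le> N" and c: "hom_poly_coeffs N k c" and inv: "g_inv q p N k c"
  shows "g_inv q p N (k-2) (laplacian_coeffs N c)"
  unfolding g_inv_def
proof
  fix x
  have shift: "hpoly N k c (\<lambda>j. x j + r * unit_vec i j)
             = hpoly N k c (\<lambda>j. lens_gen q p x j + r * lens_gen q p (unit_vec i) j)" for r i
  proof -
    have "hpoly N k c (\<lambda>j. x j + r * unit_vec i j)
        = hpoly N k c (lens_gen q p (\<lambda>j. 1 * x j + r * unit_vec i j))"
      using inv by (simp add: g_inv_def)
    then show ?thesis using lens_gen_lin[of q p 1 x r "unit_vec i"] by simp
  qed
  have "hpoly N (k-2) (laplacian_coeffs N c) x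
      = 2 * (\<Sum>i<N. coeff2 (\<lambda>r. hpoly N k c (\<lambda>j. lens_gen q p x j + r * lens_gen q p (unit_vec i) j)))"
    by (simp add: laplacian_coeff2[OF c] shift)
  also have "\<dots> = hpoly N (k-2) (laplacian_coeffs N c) (lens_gen q p x)"
    by (simp add: sum_coeff2_lens_gen[OF N] laplacian_coeff2[OF c])
  finally show "hpoly N (k-2) (laplacian_coeffs N c) (lens_gen q p x) = hpoly N (k-2) (laplacian_coeffs N c) x"
    by simp
qed

section \<open>Solving Delta c = v among invariant polynomials\<close>

definition times_rsq :: "nat \<Rightarrow> ((nat\<Rightarrow>nat)\<Rightarrow>real) \<Rightarrow> ((nat\<Rightarrow>nat)\<Rightarrow>real)" where
  "times_rsq N v = (\<lambda>a. \<Sum>i<N. if 2 \<le> a i then v (a(i := a i - 2)) else 0)"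

lemma times_rsq_hom:
  assumes "hom_poly_coeffs N d v"
  shows "hom_poly_coeffs N (d+2) (times_rsq N v)"
  unfolding hom_poly_coeffs_iff
proof (intro allI impI)
  fix a assume "times_rsq N v a \<noteq> 0"
  then obtain i where i: "i < N" "2 \<le> a i" "v (a(i := a i - 2)) \<noteq> 0"
    by (auto simp: times_rsq_def elim!: sum.not_neutral_contains_not_neutral split: if_splits)
  then have "a(i := a i - 2) \<in> mindex N d" using assms by (auto simp: hom_poly_coeffs_iff)
  moreover have "(a(i := a i - 2))(i := (a(i := a i - 2)) i + 2) = a" using i(2) by (auto simp: fun_eq_iff)
  ultimately show "a \<in> mindex N (d+2)" using mindex_add2_iff[OF i(1), of "a(i := a i - 2)" d] by metis
qed

lemma laplacian_hom:
  assumes "hom_poly_coeffs N (d+2) c"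
  shows "hom_poly_coeffs N d (laplacian_coeffs N c)"
  unfolding hom_poly_coeffs_iff
proof (intro allI impI)
  fix b assume "laplacian_coeffs N c b \<noteq> 0"
  then obtain i where i: "i < N" "c (b(i := b i + 2)) \<noteq> 0"
    by (auto simp: laplacian_coeffs_def elim!: sum.not_neutral_contains_not_neutral)
  then have "b(i := b i + 2) \<in> mindex N (d+2)" using assms by (auto simp: hom_poly_coeffs_iff)
  with mindex_add2_iff[OF i(1)] show "b \<in> mindex N d" by simp
qed

lemma upd_add2_sub2: "((b::nat\<Rightarrow>nat)(i := b i + 2))(i := (b(i := b i + 2)) i - 2) = b"
  by auto

lemma hpoly_times_rsq:
  assumes "hom_poly_coeffs N d v"
  shows "hpoly N (d+2) (times_rsq N v) x = (\<Sum>i<N. (x i)^2) * hpoly N d v x"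
proof -
  have "hpoly N (d+2) (times_rsq N v) x
      = (\<Sum>i<N. \<Sum>a\<in>mindex N (d+2). if 2 \<le> a i then v (a(i := a i - 2)) * monom_val N a x else 0)"
    unfolding hpoly_def times_rsq_def sum_distrib_right by (subst sum.swap) (intro sum.cong refl, auto)
  also have "\<dots> = (\<Sum>i<N. \<Sum>b\<in>mindex N d. v b * ((x i)^2 * monom_val N b x))"
  proof (rule sum.cong[OF refl])
    fix i assume "i \<in> {..<N}"
    then have i: "i < N" by simp
    show "(\<Sum>a\<in>mindex N (d+2). if 2 \<le> a i then v (a(i := a i - 2)) * monom_val N a x else 0)
       = (\<Sum>b\<in>mindex N d. v b * ((x i)^2 * monom_val N b x))"
      unfolding sum_mindex_shift2[OF i] by (simp only: upd_add2_sub2 monom_val_add2[OF i])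
  qed
  also have "\<dots> = (\<Sum>i<N. (x i)^2) * hpoly N d v x"
    by (simp add: hpoly_def sum_distrib_left sum_distrib_right algebra_simps sum.swap[of _ "{..<N}"])
  finally show ?thesis .
qed

lemma times_rsq_g_inv:
  assumes N: "2 * length p \<le> N" and v: "hom_poly_coeffs N d v" and inv: "g_inv q p N d v"
  shows "g_inv q p N (d+2) (times_rsq N v)"
  using inv unfolding g_inv_def hpoly_times_rsq[OF v] lens_gen_norm[OF N] by simp

text \<open>Multiplication by |x|^2 is injective: the product vanishes on the sphere only if v does.\<close>

lemma times_rsq_inj:
  assumes N: "0 < N" and v: "hom_poly_coeffs N d v" and z: "times_rsq N v = (\<lambda>_. 0)"
  shows "v = (\<lambda>_. 0)"
proof (rule hpoly_eq_0_coeffs[OF v])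
  fix x
  show "hpoly N d v x = 0"
  proof (rule hpoly_sphere_vanish[OF N])
    fix y assume y: "y \<in> sphere_pts N"
    have "hpoly N (d+2) (times_rsq N v) y = (\<Sum>i<N. (y i)^2) * hpoly N d v y"
      by (rule hpoly_times_rsq[OF v])
    then show "hpoly N d v y = 0" using y z by (simp add: sphere_pts_def hpoly_def)
  qed
qed

text \<open>For the inner product <c, v> = sum_a a! c_a v_a on degree-d coefficients, the Laplacian is
  adjoint to multiplication by |x|^2.\<close>

definition fact_weight :: "nat \<Rightarrow> (nat \<Rightarrow> nat) \<Rightarrow> real" where
  "fact_weight N a = (\<Prod>i<N. fact (a i))"

definition fischer :: "nat \<Rightarrow> nat \<Rightarrow> ((nat\<Rightarrow>nat)\<Rightarrow>real) \<Rightarrow> ((nat\<Rightarrow>nat)\<Rightarrow>real) \<Rightarrow> real" where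
  "fischer N d c v = (\<Sum>a\<in>mindex N d. fact_weight N a * c a * v a)"

lemma fact_weight_pos: "fact_weight N a > 0"
  by (simp add: fact_weight_def prod_pos)

lemma fact_weight_add2:
  assumes "i < N"
  shows "fact_weight N (b(i := b i + 2)) = fact_weight N b * real ((b i + 2) * (b i + 1))"
proof -
  have P: "(\<Prod>j\<in>{..<N}-{i}. fact ((b(i := b i + 2)) j)) = (\<Prod>j\<in>{..<N}-{i}. (fact (b j)::real))"
    by (intro prod.cong) auto
  have f: "(fact (b i + 2)::real) = fact (b i) * real ((b i + 2) * (b i + 1))"
    by (simp add: fact_Suc algebra_simps numeral_2_eq_2)
  have "fact_weight N (b(i := b i + 2)) = fact (b i + 2) * (\<Prod>j\<in>{..<N}-{i}. fact ((b(i := b i + 2)) j))"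
    using assms unfolding fact_weight_def by (subst prod.remove[of _ i]) auto
  also have "\<dots> = (fact (b i) * (\<Prod>j\<in>{..<N}-{i}. fact (b j))) * real ((b i + 2) * (b i + 1))"
    unfolding P f by (simp only: ac_simps)
  also have "fact (b i) * (\<Prod>j\<in>{..<N}-{i}. fact (b j)) = fact_weight N b"
    using assms unfolding fact_weight_def by (subst (2) prod.remove[of _ i]) auto
  finally show ?thesis .
qed

lemma fischer_adjoint: "fischer N d (laplacian_coeffs N c) v = fischer N (d+2) c (times_rsq N v)"
proof -
  have "fischer N d (laplacian_coeffs N c) v
      = (\<Sum>i<N. \<Sum>b\<in>mindex N d. fact_weight N b * real ((b i + 2) * (b i + 1)) * c (b(i := b i + 2)) * v b)"
    unfolding fischer_def laplacian_coeffs_def sum_distrib_left sum_distrib_right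
    by (subst sum.swap) (intro sum.cong refl, simp add: algebra_simps)
  also have "\<dots> = (\<Sum>i<N. \<Sum>a\<in>mindex N (d+2). if 2 \<le> a i then fact_weight N a * c a * v (a(i := a i - 2)) else 0)"
  proof (rule sum.cong[OF refl])
    fix i assume "i \<in> {..<N}"
    then have i: "i < N" by simp
    show "(\<Sum>b\<in>mindex N d. fact_weight N b * real ((b i + 2) * (b i + 1)) * c (b(i := b i + 2)) * v b)
      = (\<Sum>a\<in>mindex N (d+2). if 2 \<le> a i then fact_weight N a * c a * v (a(i := a i - 2)) else 0)"
      unfolding sum_mindex_shift2[OF i] by (simp only: upd_add2_sub2 fact_weight_add2[OF i])
  qed
  also have "\<dots> = fischer N (d+2) c (times_rsq N v)"
    unfolding fischer_def times_rsq_def sum_distrib_left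
    by (subst sum.swap) (intro sum.cong refl, auto)
  finally show ?thesis .
qed

lemma fischer_pos_definite:
  assumes "hom_poly_coeffs N d w" "fischer N d w w = 0"
  shows "w = (\<lambda>_. 0)"
proof
  fix a
  have nonneg: "0 \<le> fact_weight N a * w a * w a" for a
    using fact_weight_pos[of N a] by (metis less_imp_le mult.assoc mult_nonneg_nonneg zero_le_square)
  have "\<forall>a\<in>mindex N d. fact_weight N a * w a * w a = 0"
    using assms(2) sum_nonneg_eq_0_iff[OF finite_mindex nonneg] by (simp add: fischer_def)
  then show "w a = 0"
    using fact_weight_pos[of N a] hom_poly_coeffs_zero[OF assms(1)] by (cases "a \<in> mindex N d") auto
qed

lemma times_rsq_add: "times_rsq N (x + y) = times_rsq N x + times_rsq N y"
  unfolding times_rsq_def plus_fun_def by (auto simp: fun_eq_iff sum.distrib[symmetric] intro!: sum.cong)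
lemma times_rsq_scale: "times_rsq N (\<lambda>a. c * x a) = (\<lambda>a. c * times_rsq N x a)"
  unfolding times_rsq_def by (auto simp: fun_eq_iff sum_distrib_left intro!: sum.cong)
lemma laplacian_add: "laplacian_coeffs N (x + y) = laplacian_coeffs N x + laplacian_coeffs N y"
  unfolding laplacian_coeffs_def plus_fun_def
  by (auto simp: fun_eq_iff sum.distrib[symmetric] algebra_simps intro!: sum.cong)
lemma laplacian_scale: "laplacian_coeffs N (\<lambda>a. c * x a) = (\<lambda>a. c * laplacian_coeffs N x a)"
  unfolding laplacian_coeffs_def by (auto simp: fun_eq_iff sum_distrib_left algebra_simps intro!: sum.cong)

lemma linear_laplacian_times_rsq:
  "Vector_Spaces.linear (\<lambda>(c::real) (f::(nat\<Rightarrow>nat)\<Rightarrow>real) x. c * f x) (\<lambda>(c::real) (f::(nat\<Rightarrow>nat)\<Rightarrow>real) x. c * f x)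
     (\<lambda>v. laplacian_coeffs N (times_rsq N v))"
  unfolding Vector_Spaces.linear_iff
  by (simp add: vector_space_fun times_rsq_add times_rsq_scale laplacian_add laplacian_scale)

definition inv_coeffs :: "nat \<Rightarrow> int list \<Rightarrow> nat \<Rightarrow> nat \<Rightarrow> ((nat\<Rightarrow>nat)\<Rightarrow>real) set" where
  "inv_coeffs q p N d = {v. hom_poly_coeffs N d v \<and> g_inv q p N d v}"

lemma subspace_inv_coeffs: "cf.subspace (inv_coeffs q p N d)"
  unfolding cf.subspace_def inv_coeffs_def
proof (intro conjI ballI allI)
  show "0 \<in> {v. hom_poly_coeffs N d v \<and> g_inv q p N d v}"
    by (simp add: hom_poly_coeffs_iff g_inv_def zero_fun_def)
next
  fix x y assume "x \<in> {v. hom_poly_coeffs N d v \<and> g_inv q p N d v}"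
    "y \<in> {v. hom_poly_coeffs N d v \<and> g_inv q p N d v}"
  then show "x + y \<in> {v. hom_poly_coeffs N d v \<and> g_inv q p N d v}"
    by (auto simp: g_inv_def plus_fun_def hpoly_add intro: hom_poly_coeffs_add)
next
  fix c x assume "x \<in> {v. hom_poly_coeffs N d v \<and> g_inv q p N d v}"
  then show "(\<lambda>xa. c * x xa) \<in> {v. hom_poly_coeffs N d v \<and> g_inv q p N d v}"
    by (auto simp: g_inv_def hpoly_smult intro: hom_poly_coeffs_scale)
qed

text \<open>Delta o |x|^2 maps the invariants of degree d into themselves ...\<close>

lemma laplacian_times_rsq_maps:
  assumes N: "2 * length p \<le> N" and w: "w \<in> inv_coeffs q p N d"
  shows "laplacian_coeffs N (times_rsq N w) \<in> inv_coeffs q p N d"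
proof -
  have h: "hom_poly_coeffs N d w" and i: "g_inv q p N d w" using w by (auto simp: inv_coeffs_def)
  have "g_inv q p N (d + 2 - 2) (laplacian_coeffs N (times_rsq N w))"
    by (rule laplacian_g_inv[OF N times_rsq_hom[OF h] times_rsq_g_inv[OF N h i]])
  then show ?thesis using laplacian_hom[OF times_rsq_hom[OF h]] by (simp add: inv_coeffs_def)
qed

text \<open>... injectively, since <Delta(|x|^2 w), w> = <|x|^2 w, |x|^2 w>.\<close>

lemma laplacian_times_rsq_inj:
  assumes N0: "0 < N"
  shows "inj_on (\<lambda>v. laplacian_coeffs N (times_rsq N v)) (inv_coeffs q p N d)"
proof (subst cfp.linear_inj_on_iff_eq_0[OF linear_laplacian_times_rsq subspace_inv_coeffs], intro ballI impI)
  fix w assume w: "w \<in> inv_coeffs q p N d" and z: "laplacian_coeffs N (times_rsq N w) = 0"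
  have h: "hom_poly_coeffs N d w" using w by (simp add: inv_coeffs_def)
  have "fischer N (d+2) (times_rsq N w) (times_rsq N w) = fischer N d (laplacian_coeffs N (times_rsq N w)) w"
    by (simp add: fischer_adjoint)
  also have "\<dots> = 0" using z by (simp add: fischer_def zero_fun_def)
  finally have "times_rsq N w = (\<lambda>_. 0)" by (rule fischer_pos_definite[OF times_rsq_hom[OF h]])
  then show "w = 0" using times_rsq_inj[OF N0 h] by (simp add: zero_fun_def)
qed

text \<open>An injective endomorphism of a finite-dimensional space is surjective, so every invariant
  v of degree d is the Laplacian of an invariant of degree d+2.\<close>

lemma laplacian_surj_inv:
  assumes N0: "0 < N" and N: "2 * length p \<le> N" and v: "v \<in> inv_coeffs q p N d"
  shows "\<exists>c\<in>inv_coeffs q p N (d+2). laplacian_coeffs N c = v"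
proof -
  let ?I = "inv_coeffs q p N d"
  let ?T = "\<lambda>v. laplacian_coeffs N (times_rsq N v)"
  have sub: "cf.subspace ?I" by (rule subspace_inv_coeffs)
  have span: "cf.span ?I = ?I" using sub by (simp add: cf.span_eq_iff)
  have "inj_on ?T (cf.span ?I)" unfolding span by (rule laplacian_times_rsq_inj[OF N0])
  then have "cf.dim (?T ` ?I) = cf.dim ?I" by (rule cfp.dim_image_eq_general[OF linear_laplacian_times_rsq])
  moreover have "?I \<subseteq> cf.span (basis_coeff ` mindex N d)"
    using hom_poly_coeffs_span by (auto simp: inv_coeffs_def)
  ultimately have "?T ` ?I = ?I"
    using cf.subspace_eq_dim[OF cfp.linear_subspace_image[OF linear_laplacian_times_rsq sub] sub]
      laplacian_times_rsq_maps[OF N] finite_mindex by blast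
  then obtain w where w: "w \<in> ?I" "v = ?T w" using v by (metis imageE)
  have "times_rsq N w \<in> inv_coeffs q p N (d+2)"
    using w(1) times_rsq_hom times_rsq_g_inv[OF N] by (auto simp: inv_coeffs_def)
  then show ?thesis using w(2) by blast
qed

section \<open>Adding a coordinate fixed by g\<close>

text \<open>Throughout, 2n <= N, so g fixes the coordinate x_N.  A polynomial in x_0..x_N is
  g-invariant iff all its slices (coefficients of the powers of x_N) are.\<close>

lemma g_inv_slice:
  assumes N: "2 * length p \<le> N" and c: "g_inv q p (Suc N) k c" and m: "m \<le> k"
  shows "g_inv q p N (k - m) (coeff_slice N m c)"
  unfolding g_inv_def
proof
  fix x
  let ?S = "\<lambda>m y. hpoly N (k - m) (coeff_slice N m c) y"
  have "(\<Sum>m\<le>k. t ^ m * (?S m (lens_gen q p x) - ?S m x)) = 0" for t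
  proof -
    have "hpoly (Suc N) k c (lens_gen q p (x(N:=t))) = hpoly (Suc N) k c (x(N:=t))"
      using c by (simp add: g_inv_def)
    moreover have "?S m (y(N:=t)) = ?S m y" for m y by (rule hpoly_cong) auto
    ultimately have "(\<Sum>m\<le>k. t ^ m * ?S m (lens_gen q p x)) = (\<Sum>m\<le>k. t ^ m * ?S m x)"
      by (simp add: hpoly_slice lens_gen_upd[OF N])
    then show ?thesis by (simp add: algebra_simps sum_subtractf)
  qed
  from polyfun_coeffs_zero[OF this m] show "?S m (lens_gen q p x) = ?S m x" by simp
qed

lemma g_inv_of_slices:
  assumes N: "2 * length p \<le> N" and sl: "\<And>m. m \<le> k \<Longrightarrow> g_inv q p N (k - m) (coeff_slice N m c)"
  shows "g_inv q p (Suc N) k c"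
  unfolding g_inv_def
proof
  fix x
  have "lens_gen q p x N = x N" using N by (simp add: lens_gen_high)
  then show "hpoly (Suc N) k c (lens_gen q p x) = hpoly (Suc N) k c x"
    using sl by (simp add: hpoly_slice g_inv_def)
qed

definition inv_harm :: "nat \<Rightarrow> int list \<Rightarrow> nat \<Rightarrow> nat \<Rightarrow> ((nat\<Rightarrow>nat)\<Rightarrow>real) set" where
  "inv_harm q p N k = {c. hom_poly_coeffs N k c \<and> harmonic_coeffs N c \<and> g_inv q p N k c}"

lemma laplacian_add_apply:
  "laplacian_coeffs N (\<lambda>a. x a + y a) b = laplacian_coeffs N x b + laplacian_coeffs N y b"
  by (simp add: laplacian_coeffs_def sum.distrib algebra_simps)

lemma subspace_inv_harm: "cf.subspace (inv_harm q p N k)"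
  unfolding cf.subspace_def
proof (intro conjI ballI allI)
  show "0 \<in> inv_harm q p N k"
    by (simp add: inv_harm_def hom_poly_coeffs_iff g_inv_def harmonic_coeffs_def laplacian_coeffs_def
        zero_fun_def)
next
  fix x y assume "x \<in> inv_harm q p N k" "y \<in> inv_harm q p N k"
  then show "x + y \<in> inv_harm q p N k"
    by (auto simp: inv_harm_def g_inv_def harmonic_coeffs_def laplacian_add_apply plus_fun_def hpoly_add
        intro: hom_poly_coeffs_add)
next
  fix c x assume "x \<in> inv_harm q p N k"
  then show "(\<lambda>xa. c * x xa) \<in> inv_harm q p N k"
    by (auto simp: inv_harm_def g_inv_def harmonic_coeffs_def laplacian_scale hpoly_smult
        intro: hom_poly_coeffs_scale)
qed

lemma inv_harm_span: "inv_harm q p N k \<subseteq> cf.span (basis_coeff ` mindex N k)"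
  using hom_poly_coeffs_span by (auto simp: inv_harm_def)

lemma dim_inv_harm_le_card: "cf.dim (inv_harm q p N k) \<le> card (mindex N k)"
proof -
  have "cf.dim (inv_harm q p N k) \<le> card (basis_coeff ` mindex N k)"
    by (rule cf.dim_le_card[OF inv_harm_span finite_imageI[OF finite_mindex]])
  also have "\<dots> \<le> card (mindex N k)" by (rule card_image_le[OF finite_mindex])
  finally show ?thesis .
qed

definition deriv_last :: "nat \<Rightarrow> ((nat\<Rightarrow>nat)\<Rightarrow>real) \<Rightarrow> ((nat\<Rightarrow>nat)\<Rightarrow>real)" where
  "deriv_last N c = (\<lambda>b. real (b N + 1) * c (b(N := b N + 1)))"

lemma linear_deriv_last:
  "Vector_Spaces.linear (\<lambda>(c::real) (f::(nat\<Rightarrow>nat)\<Rightarrow>real) x. c * f x)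
     (\<lambda>(c::real) (f::(nat\<Rightarrow>nat)\<Rightarrow>real) x. c * f x) (deriv_last N)"
  unfolding Vector_Spaces.linear_iff
  by (simp add: vector_space_fun deriv_last_def fun_eq_iff algebra_simps)

lemma deriv_last_hom:
  assumes "hom_poly_coeffs (Suc N) k c"
  shows "hom_poly_coeffs (Suc N) (k - 1) (deriv_last N c)"
  unfolding hom_poly_coeffs_iff
proof (intro allI impI)
  fix b assume "deriv_last N c b \<noteq> 0"
  then have "c (b(N := b N + 1)) \<noteq> 0" by (auto simp: deriv_last_def)
  then have "b(N := b N + 1) \<in> mindex (Suc N) k" using assms by (auto simp: hom_poly_coeffs_iff)
  then show "b \<in> mindex (Suc N) (k - 1)" by (auto simp: mindex_Suc_upd mindex_Suc_self)
qed

lemma laplacian_deriv_last: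
  "laplacian_coeffs (Suc N) (deriv_last N c) b
   = real (b N + 1) * laplacian_coeffs (Suc N) c (b(N := b N + 1))"
  unfolding laplacian_coeffs_def sum_distrib_left
proof (rule sum.cong[OF refl])
  fix i assume "i \<in> {..<Suc N}"
  show "real ((b i + 2) * (b i + 1)) * deriv_last N c (b(i := b i + 2)) =
    real (b N + 1) * (real (((b(N := b N + 1)) i + 2) * ((b(N := b N + 1)) i + 1)) *
      c ((b(N := b N + 1))(i := (b(N := b N + 1)) i + 2)))"
  proof (cases "i = N")
    case False
    then have "(b(i := b i + 2))(N := b N + 1) = (b(N := b N + 1))(i := b i + 2)"
      by (simp add: fun_upd_twist)
    then show ?thesis using False by (simp add: deriv_last_def algebra_simps)
  qed (simp add: deriv_last_def algebra_simps)
qed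

lemma deriv_last_harmonic: "harmonic_coeffs (Suc N) c \<Longrightarrow> harmonic_coeffs (Suc N) (deriv_last N c)"
  by (simp add: harmonic_coeffs_def laplacian_deriv_last)

lemma coeff_slice_deriv_last:
  "coeff_slice N m (deriv_last N c) = (\<lambda>a. real (m + 1) * coeff_slice N (m + 1) c a)"
  by (auto simp: coeff_slice_def deriv_last_def fun_eq_iff)

lemma deriv_last_g_inv:
  assumes N: "2 * length p \<le> N" and c: "g_inv q p (Suc N) k c" and k: "1 \<le> k"
  shows "g_inv q p (Suc N) (k - 1) (deriv_last N c)"
proof (rule g_inv_of_slices[OF N])
  fix m assume m: "m \<le> k - 1"
  have "g_inv q p N (k - (m+1)) (coeff_slice N (m+1) c)" using g_inv_slice[OF N c] m k by simp
  moreover have "k - 1 - m = k - (m + 1)" by simp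
  ultimately show "g_inv q p N (k - 1 - m) (coeff_slice N m (deriv_last N c))"
    by (simp add: coeff_slice_deriv_last g_inv_def hpoly_smult)
qed

lemma deriv_last_inv_harm:
  assumes N: "2 * length p \<le> N" and k: "1 \<le> k" and c: "c \<in> inv_harm q p (Suc N) k"
  shows "deriv_last N c \<in> inv_harm q p (Suc N) (k - 1)"
  using c deriv_last_hom deriv_last_harmonic deriv_last_g_inv[OF N _ k] by (auto simp: inv_harm_def)

lemma laplacian_Suc:
  "laplacian_coeffs (Suc N) c b
   = laplacian_coeffs N c b + real ((b N + 2) * (b N + 1)) * c (b(N := b N + 2))"
  by (simp add: laplacian_coeffs_def)

lemma hpoly_Suc_eq:
  assumes "hom_poly_coeffs N k c"
  shows "hpoly (Suc N) k c x = hpoly N k c x"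
proof -
  have "hpoly (Suc N) k c x = (\<Sum>a\<in>mindex N k. c a * monom_val (Suc N) a x)"
    unfolding hpoly_def
    by (rule sum.mono_neutral_right)
      (use assms in \<open>auto simp: finite_mindex mindex_N_iff[of _ N k] hom_poly_coeffs_iff\<close>)
  also have "\<dots> = hpoly N k c x"
    unfolding hpoly_def by (intro sum.cong refl) (simp add: monom_val_Suc mindex_def)
  finally show ?thesis .
qed

lemma inv_harm_Suc_iff:
  assumes c0: "\<And>a. a N \<noteq> 0 \<Longrightarrow> c a = 0"
  shows "c \<in> inv_harm q p (Suc N) k \<longleftrightarrow> c \<in> inv_harm q p N k"
proof -
  have hom: "hom_poly_coeffs (Suc N) k c \<longleftrightarrow> hom_poly_coeffs N k c"
    using c0 by (auto simp: hom_poly_coeffs_iff mindex_N_iff[of _ N k])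
  have "harmonic_coeffs (Suc N) c \<longleftrightarrow> harmonic_coeffs N c"
    using c0 by (simp add: harmonic_coeffs_def laplacian_Suc)
  moreover have "hom_poly_coeffs N k c \<Longrightarrow> g_inv q p (Suc N) k c \<longleftrightarrow> g_inv q p N k c"
    by (simp add: g_inv_def hpoly_Suc_eq)
  ultimately show ?thesis using hom by (auto simp: inv_harm_def)
qed

lemma kernel_deriv_last:
  "{c \<in> inv_harm q p (Suc N) k. deriv_last N c = 0} = inv_harm q p N k"
proof (intro set_eqI iffI)
  fix c assume c: "c \<in> {c \<in> inv_harm q p (Suc N) k. deriv_last N c = 0}"
  have "c a = 0" if "a N \<noteq> 0" for a
  proof -
    have "deriv_last N c (a(N := a N - 1)) = 0" using c by (simp add: zero_fun_def)
    moreover have "(a(N := a N - 1))(N := a N - 1 + 1) = a" using that by auto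
    ultimately show ?thesis using that by (simp add: deriv_last_def)
  qed
  then show "c \<in> inv_harm q p N k" using c inv_harm_Suc_iff by blast
next
  fix c assume c: "c \<in> inv_harm q p N k"
  have c0: "c a = 0" if "a N \<noteq> 0" for a
    using hom_poly_coeffs_zero[of N k c a] c that by (auto simp: inv_harm_def mindex_def)
  then have "deriv_last N c = 0" by (auto simp: deriv_last_def fun_eq_iff)
  then show "c \<in> {c \<in> inv_harm q p (Suc N) k. deriv_last N c = 0}"
    using c inv_harm_Suc_iff[of N c] c0 by blast
qed

text \<open>The polynomial with constant term c0 (in x_N) whose x_N-derivative is u.\<close>

definition antideriv_last ::
  "nat \<Rightarrow> ((nat\<Rightarrow>nat)\<Rightarrow>real) \<Rightarrow> ((nat\<Rightarrow>nat)\<Rightarrow>real) \<Rightarrow> ((nat\<Rightarrow>nat)\<Rightarrow>real)" where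
  "antideriv_last N c0 u = (\<lambda>a. if a N = 0 then c0 a else u (a(N := a N - 1)) / real (a N))"

lemma deriv_last_antideriv: "deriv_last N (antideriv_last N c0 u) = u"
proof
  fix b :: "nat \<Rightarrow> nat"
  have "(b(N := b N + 1))(N := b N + 1 - 1) = b" by auto
  then show "deriv_last N (antideriv_last N c0 u) b = u b" by (simp add: deriv_last_def antideriv_last_def)
qed

lemma antideriv_last_hom:
  assumes c0: "hom_poly_coeffs N k c0" and u: "hom_poly_coeffs (Suc N) (k - 1) u" and k: "1 \<le> k"
  shows "hom_poly_coeffs (Suc N) k (antideriv_last N c0 u)"
  unfolding hom_poly_coeffs_iff
proof (intro allI impI)
  fix a assume ca: "antideriv_last N c0 u a \<noteq> 0"
  show "a \<in> mindex (Suc N) k"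
  proof (cases "a N = 0")
    case True
    then have "a \<in> mindex N k" using ca c0 by (auto simp: antideriv_last_def hom_poly_coeffs_iff)
    then show ?thesis using mindex_N_iff by blast
  next
    case False
    then have "u (a(N := a N - 1)) \<noteq> 0" using ca by (auto simp: antideriv_last_def)
    then have "a(N := a N - 1) \<in> mindex (Suc N) (k - 1)" using u by (auto simp: hom_poly_coeffs_iff)
    then show ?thesis using False k by (auto simp: mindex_Suc_upd mindex_Suc_self)
  qed
qed

text \<open>The antiderivative is harmonic provided Delta c0 = - (x_N-coefficient of u): the constant
  term of the Laplacian is then cancelled, and the higher terms cancel because u is harmonic.\<close>

lemma antideriv_last_harmonic:
  assumes uH: "harmonic_coeffs (Suc N) u"
    and c0: "laplacian_coeffs N c0 = (\<lambda>a. - coeff_slice N 1 u a)"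
  shows "harmonic_coeffs (Suc N) (antideriv_last N c0 u)"
  unfolding harmonic_coeffs_def
proof
  fix b
  let ?c = "antideriv_last N c0 u"
  show "laplacian_coeffs (Suc N) ?c b = 0"
  proof (cases "b N")
    case 0
    have "laplacian_coeffs N ?c b = laplacian_coeffs N c0 b"
      unfolding laplacian_coeffs_def using 0 by (intro sum.cong refl) (auto simp: antideriv_last_def)
    also have "\<dots> = - u (b(N := 1))" using c0 0 by (simp add: coeff_slice_def)
    finally have "laplacian_coeffs N ?c b = - u (b(N := 1))" .
    moreover have "?c (b(N := b N + 2)) = u (b(N := 1)) / 2" using 0 by (simp add: antideriv_last_def)
    ultimately show ?thesis using 0 by (simp add: laplacian_Suc)
  next
    case (Suc m)
    define L where "L = laplacian_coeffs N u (b(N := m))"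
    define U where "U = u (b(N := m + 2))"
    have lap_c: "laplacian_coeffs N ?c b = L / real (m + 1)"
      unfolding L_def laplacian_coeffs_def sum_divide_distrib
      by (intro sum.cong refl) (use Suc in \<open>auto simp: antideriv_last_def fun_upd_twist\<close>)
    have top: "?c (b(N := b N + 2)) = U / real (m + 3)"
      using Suc by (simp add: antideriv_last_def U_def)
    have "laplacian_coeffs (Suc N) u (b(N := m)) = 0" using uH by (simp add: harmonic_coeffs_def)
    then have "L + real ((m + 2) * (m + 1)) * U = 0" by (simp add: laplacian_Suc L_def U_def)
    then have L: "L = - real ((m + 2) * (m + 1)) * U" by (simp only: add_eq_0_iff2 mult_minus_left)
    have "laplacian_coeffs (Suc N) ?c b = L / real (m + 1) + real ((m + 3) * (m + 2)) * (U / real (m + 3))"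
      unfolding laplacian_Suc lap_c top unfolding Suc by (simp only: add_Suc_shift numeral_3_eq_3 numeral_2_eq_2 One_nat_def)
    also have "\<dots> = - (real (m + 2) * U) + real (m + 2) * U"
      unfolding L of_nat_mult by (simp del: of_nat_add)
    finally show ?thesis by simp
  qed
qed

lemma antideriv_last_g_inv:
  assumes N: "2 * length p \<le> N" and c0: "g_inv q p N k c0" "hom_poly_coeffs N k c0"
    and u: "g_inv q p (Suc N) (k - 1) u" and k: "1 \<le> k"
  shows "g_inv q p (Suc N) k (antideriv_last N c0 u)"
proof (rule g_inv_of_slices[OF N])
  fix m assume m: "m \<le> k"
  show "g_inv q p N (k - m) (coeff_slice N m (antideriv_last N c0 u))"
  proof (cases m)
    case 0
    have "c0 a = 0" if "a N \<noteq> 0" for a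
      using hom_poly_coeffs_zero[OF c0(2)] that by (auto simp: mindex_def)
    then have "coeff_slice N 0 (antideriv_last N c0 u) a = c0 a" for a
      by (cases "a N = 0") (simp_all add: coeff_slice_def antideriv_last_def fun_upd_idem)
    then have "coeff_slice N 0 (antideriv_last N c0 u) = c0" by blast
    then show ?thesis using c0(1) 0 by simp
  next
    case (Suc m')
    have "coeff_slice N m (antideriv_last N c0 u) = (\<lambda>a. coeff_slice N m' u a / real (Suc m'))"
      using Suc by (simp add: coeff_slice_def antideriv_last_def fun_eq_iff)
    moreover have "g_inv q p N (k - 1 - m') (coeff_slice N m' u)" using g_inv_slice[OF N u] m Suc by simp
    moreover have "k - m = k - 1 - m'" using Suc by simp
    ultimately show ?thesis by (simp add: g_inv_def hpoly_div)
  qed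
qed

text \<open>d/dx_N maps inv_harm (N+1) k onto inv_harm (N+1) (k-1).  Given u, choose the constant
  term c0 with Delta c0 = - (x_N-coefficient of u) by surjectivity of the Laplacian.\<close>

lemma image_deriv_last:
  assumes N0: "0 < N" and N: "2 * length p \<le> N" and k: "1 \<le> k"
    and u: "u \<in> inv_harm q p (Suc N) (k - 1)"
  shows "u \<in> deriv_last N ` inv_harm q p (Suc N) k"
proof -
  from u have uh: "hom_poly_coeffs (Suc N) (k - 1) u" and uH: "harmonic_coeffs (Suc N) u"
    and ui: "g_inv q p (Suc N) (k - 1) u" by (auto simp: inv_harm_def)
  define v where "v = (\<lambda>a. - coeff_slice N 1 u a)"
  obtain c0 where c0: "c0 \<in> inv_coeffs q p N k" "laplacian_coeffs N c0 = v"
  proof (cases "k = 1")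
    case True
    then have "v = (\<lambda>_. 0)" using coeff_slice_big[OF uh] by (simp add: v_def)
    moreover have "(\<lambda>_. 0) \<in> inv_coeffs q p N k"
      by (simp add: inv_coeffs_def hom_poly_coeffs_iff g_inv_def)
    moreover have "laplacian_coeffs N (\<lambda>_. 0) = (\<lambda>_. 0)" by (simp add: laplacian_coeffs_def fun_eq_iff)
    ultimately show ?thesis using that by metis
  next
    case False
    have "hom_poly_coeffs N (k - 2) v"
      using hom_poly_coeffs_scale[OF coeff_slice_hom[OF uh, of 1], of "-1"] by (simp add: v_def numeral_2_eq_2)
    moreover have "g_inv q p N (k - 2) v"
      using g_inv_slice[OF N ui, of 1] False k unfolding g_inv_def v_def
      by (simp add: hpoly_smult[of _ _ "-1", simplified] numeral_2_eq_2)
    ultimately have "v \<in> inv_coeffs q p N (k - 2)" by (simp add: inv_coeffs_def)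
    then obtain c where "c \<in> inv_coeffs q p N (k - 2 + 2)" "laplacian_coeffs N c = v"
      using laplacian_surj_inv[OF N0 N] by blast
    moreover have "k - 2 + 2 = k" using False k by simp
    ultimately show ?thesis using that by metis
  qed
  let ?c = "antideriv_last N c0 u"
  have "hom_poly_coeffs (Suc N) k ?c"
    using c0(1) by (intro antideriv_last_hom[OF _ uh k]) (simp add: inv_coeffs_def)
  moreover have "harmonic_coeffs (Suc N) ?c"
    using c0(2) by (intro antideriv_last_harmonic[OF uH]) (simp add: v_def)
  moreover have "g_inv q p (Suc N) k ?c"
    using c0(1) by (intro antideriv_last_g_inv[OF N _ _ ui k]) (simp_all add: inv_coeffs_def)
  ultimately have "?c \<in> inv_harm q p (Suc N) k" by (simp add: inv_harm_def)
  then show ?thesis using deriv_last_antideriv[of N c0 u] by (metis image_eqI)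
qed

lemma inv_harm_Suc_0: "inv_harm q p (Suc N) 0 = inv_harm q p N 0"
proof -
  have "deriv_last N c = 0" if c: "c \<in> inv_harm q p (Suc N) 0" for c
  proof -
    have h: "hom_poly_coeffs (Suc N) 0 c" using c by (simp add: inv_harm_def)
    have "b(N := b N + 1) \<notin> mindex (Suc N) 0" for b by (simp add: mindex_Suc_upd)
    then show ?thesis using hom_poly_coeffs_zero[OF h] by (simp add: deriv_last_def fun_eq_iff)
  qed
  then have "inv_harm q p (Suc N) 0 = {c \<in> inv_harm q p (Suc N) 0. deriv_last N c = 0}" by blast
  also have "\<dots> = inv_harm q p N 0" by (rule kernel_deriv_last)
  finally show ?thesis .
qed

lemma dim_inv_harm_step:
  assumes N0: "0 < N" and N: "2 * length p \<le> N" and k: "1 \<le> k"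
  shows "cf.dim (inv_harm q p (Suc N) k) = cf.dim (inv_harm q p N k) + cf.dim (inv_harm q p (Suc N) (k - 1))"
proof -
  have "deriv_last N ` inv_harm q p (Suc N) k = inv_harm q p (Suc N) (k - 1)"
  proof
    show "deriv_last N ` inv_harm q p (Suc N) k \<subseteq> inv_harm q p (Suc N) (k - 1)"
      using deriv_last_inv_harm[OF N k] by (rule image_subsetI)
    show "inv_harm q p (Suc N) (k - 1) \<subseteq> deriv_last N ` inv_harm q p (Suc N) k"
      using image_deriv_last[OF N0 N k] by (rule subsetI)
  qed
  then show ?thesis
    using cfp.rank_nullity_subspace[OF linear_deriv_last[of N] subspace_inv_harm[of q p "Suc N" k]
        inv_harm_span[of q p "Suc N" k] finite_imageI[OF finite_mindex]]
    by (simp add: kernel_deriv_last)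
qed

lemma dim_inv_harm_Suc:
  assumes N0: "0 < N" and N: "2 * length p \<le> N"
  shows "cf.dim (inv_harm q p (Suc N) k) = (\<Sum>j\<le>k. cf.dim (inv_harm q p N j))"
proof (induction k)
  case 0
  then show ?case by (simp add: inv_harm_Suc_0)
next
  case (Suc k)
  then show ?case using dim_inv_harm_step[OF N0 N, of "Suc k" q] by simp
qed

section \<open>From functions on the sphere to coefficients\<close>

definition sphere_restr :: "nat \<Rightarrow> nat \<Rightarrow> ((nat\<Rightarrow>nat)\<Rightarrow>real) \<Rightarrow> (nat\<Rightarrow>real) \<Rightarrow> real" where
  "sphere_restr N k c = (\<lambda>x. if x \<in> sphere_pts N then hpoly N k c x else 0)"

lemma linear_sphere_restr:
  "Vector_Spaces.linear (\<lambda>(c::real) (f::(nat\<Rightarrow>nat)\<Rightarrow>real) x. c * f x)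
     (\<lambda>(c::real) (f::(nat\<Rightarrow>real)\<Rightarrow>real) x. c * f x) (sphere_restr N k)"
  unfolding Vector_Spaces.linear_iff
  by (auto simp: vector_space_fun sphere_restr_def fun_eq_iff plus_fun_def hpoly_add hpoly_smult)

lemma sphere_restr_eq:
  assumes "hom_poly_coeffs N k c"
  shows "sphere_restr N k c = (\<lambda>x. if x \<in> sphere_pts N then poly_fun N c x else 0)"
  unfolding sphere_restr_def poly_fun_hpoly[OF assms] ..

text \<open>H^k_G is the image of inv_harm under restriction: invariance under g on the sphere
  propagates to all of R^N, and to all powers of g.\<close>

lemma invariant_harm_space_eq:
  assumes N0: "0 < N" and N: "N = 2 * length p + W"
  shows "invariant_harm_space W q p k = sphere_restr N k ` inv_harm q p N k"
proof
  have N': "2 * length p \<le> N" using N by simp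
  show "invariant_harm_space W q p k \<subseteq> sphere_restr N k ` inv_harm q p N k"
  proof
    fix f assume "f \<in> invariant_harm_space W q p k"
    then obtain c where f: "f = (\<lambda>x. if x \<in> sphere_pts N then poly_fun N c x else 0)"
      and c: "hom_poly_coeffs N k c" "harmonic_coeffs N c"
      and inv: "\<forall>h\<in>lens_group q p. \<forall>x\<in>sphere_pts N. f (h x) = f x"
      by (auto simp: invariant_harm_space_def harm_space_def N[symmetric])
    have f': "f = sphere_restr N k c" using f sphere_restr_eq[OF c(1)] by simp
    have "lens_gen q p \<in> lens_group q p" unfolding lens_group_def by (rule CollectI, rule exI[of _ 1]) simp
    then have "\<forall>x\<in>sphere_pts N. hpoly N k c (lens_gen q p x) = hpoly N k c x"
      using inv lens_gen_sphere[OF N'] by (auto simp: f' sphere_restr_def)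
    then have "g_inv q p N k c" using g_inv_from_sphere[OF N0 N'] by blast
    then show "f \<in> sphere_restr N k ` inv_harm q p N k" using c f' by (auto simp: inv_harm_def)
  qed
  show "sphere_restr N k ` inv_harm q p N k \<subseteq> invariant_harm_space W q p k"
  proof
    fix f assume "f \<in> sphere_restr N k ` inv_harm q p N k"
    then obtain c where c: "hom_poly_coeffs N k c" "harmonic_coeffs N c" "g_inv q p N k c"
      and f: "f = sphere_restr N k c" by (auto simp: inv_harm_def)
    have "f \<in> harm_space N k"
      unfolding harm_space_def f sphere_restr_eq[OF c(1)] using c by blast
    moreover have "\<forall>h\<in>lens_group q p. \<forall>x\<in>sphere_pts N. f (h x) = f x"
      using lens_gen_pow_sphere[OF N'] g_inv_pow[OF c(3)] by (auto simp: lens_group_def f sphere_restr_def)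
    ultimately show "f \<in> invariant_harm_space W q p k"
      by (simp add: invariant_harm_space_def N)
  qed
qed

text \<open>Restriction is injective on homogeneous polynomials, so it preserves dimension.\<close>

lemma fun_dim_invariant_harm_space:
  assumes N0: "0 < N" and N: "N = 2 * length p + W"
  shows "fun_dim (invariant_harm_space W q p k) = cf.dim (inv_harm q p N k)"
proof -
  have span: "cf.span (inv_harm q p N k) = inv_harm q p N k"
    using subspace_inv_harm by (simp add: cf.span_eq_iff)
  have "inj_on (sphere_restr N k) (inv_harm q p N k)"
  proof (subst rp.linear_inj_on_iff_eq_0[OF linear_sphere_restr subspace_inv_harm], intro ballI impI)
    fix c assume c: "c \<in> inv_harm q p N k" and z: "sphere_restr N k c = 0"
    have h: "hom_poly_coeffs N k c" using c by (simp add: inv_harm_def)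
    have "hpoly N k c x = 0" for x
    proof (rule hpoly_sphere_vanish[OF N0])
      fix y assume "y \<in> sphere_pts N"
      then show "hpoly N k c y = 0" using fun_cong[OF z, of y] by (simp add: sphere_restr_def)
    qed
    then show "c = 0" using hpoly_eq_0_coeffs[OF h] by (simp add: zero_fun_def)
  qed
  then have "inj_on (sphere_restr N k) (cf.span (inv_harm q p N k))" unfolding span .
  then show ?thesis
    unfolding invariant_harm_space_eq[OF N0 N] fun_dim_def by (rule rp.dim_image_eq_general[OF linear_sphere_restr])
qed

section \<open>Generating functions\<close>

definition inv_dim :: "nat \<Rightarrow> int list \<Rightarrow> nat \<Rightarrow> nat \<Rightarrow> nat" where
  "inv_dim q p W k = fun_dim (invariant_harm_space W q p k)"

lemma inv_dim_Suc:
  assumes "p \<noteq> []"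
  shows "inv_dim q p (Suc W) k = (\<Sum>j\<le>k. inv_dim q p W j)"
proof -
  let ?N = "2 * length p + W"
  have N0: "0 < ?N" "0 < Suc ?N" using assms by auto
  have "inv_dim q p (Suc W) k = cf.dim (inv_harm q p (Suc ?N) k)"
    unfolding inv_dim_def by (rule fun_dim_invariant_harm_space) (use N0 in auto)
  also have "\<dots> = (\<Sum>j\<le>k. cf.dim (inv_harm q p ?N j))" by (rule dim_inv_harm_Suc) (use N0 in auto)
  also have "\<dots> = (\<Sum>j\<le>k. inv_dim q p W j)" unfolding inv_dim_def
    by (intro sum.cong refl fun_dim_invariant_harm_space[symmetric]) (use N0 in auto)
  finally show ?thesis .
qed

lemma card_mindex_Suc: "card (mindex (Suc M) k) = (\<Sum>j\<le>k. card (mindex M j))"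
proof -
  have "bij_betw (\<lambda>(j, b). b(M := k - j)) (Sigma {..k} (\<lambda>j. mindex M j)) (mindex (Suc M) k)"
  proof (rule bij_betwI[where g="\<lambda>a. (k - a M, a(M := 0))"])
    show "(\<lambda>(j, b). b(M := k - j)) \<in> Sigma {..k} (mindex M) \<rightarrow> mindex (Suc M) k"
      by (auto simp: mindex_Suc_upd mindex_def)
    show "(\<lambda>a. (k - a M, a(M := 0))) \<in> mindex (Suc M) k \<rightarrow> Sigma {..k} (mindex M)"
    proof
      fix a assume a: "a \<in> mindex (Suc M) k"
      then have s: "(\<Sum>i<M. a i) + a M = k" "\<forall>i>M. a i = 0" by (auto simp: mindex_Suc_self)
      have "\<forall>i\<ge>M. (a(M := 0)) i = 0" using s(2) by (auto simp: le_less)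
      then show "(k - a M, a(M := 0)) \<in> Sigma {..k} (mindex M)"
        using s by (auto simp: mindex_def sum_upd_N)
    qed
    fix x assume "x \<in> Sigma {..k} (mindex M)"
    then obtain j b where x: "x = (j, b)" "j \<le> k" "b \<in> mindex M j" by auto
    then have "b M = 0" by (simp add: mindex_def)
    then show "(\<lambda>a. (k - a M, a(M := 0))) ((\<lambda>(j, b). b(M := k - j)) x) = x"
      using x by (auto simp: fun_eq_iff)
  next
    fix a assume a: "a \<in> mindex (Suc M) k"
    then have s: "(\<Sum>i<M. a i) + a M = k" by (auto simp: mindex_Suc_self)
    then show "(\<lambda>(j, b). b(M := k - j)) ((\<lambda>a. (k - a M, a(M := 0))) a) = a"
      by (auto simp: fun_eq_iff)
  qed
  then have "card (mindex (Suc M) k) = card (Sigma {..k} (\<lambda>j. mindex M j))"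
    by (simp add: bij_betw_same_card)
  also have "\<dots> = (\<Sum>j\<le>k. card (mindex M j))" by (simp add: card_SigmaI finite_mindex)
  finally show ?thesis .
qed

text \<open>Partial sums of a convergent nonnegative power series at 0 <= r < 1 still converge
  (Cauchy product with the geometric series).\<close>

lemma summable_partial_sums:
  fixes a :: "nat \<Rightarrow> real"
  assumes a: "\<And>k. 0 \<le> a k" and r: "0 \<le> r" "r < 1" and s: "summable (\<lambda>k. a k * r^k)"
  shows "summable (\<lambda>k. (\<Sum>j\<le>k. a j) * r^k)"
proof -
  have s1: "summable (\<lambda>k. norm (a k * r^k))" using s a r by simp
  have s2: "summable (\<lambda>k. norm (r^k))" using r by (simp add: summable_geometric)
  have "summable (\<lambda>k. \<Sum>i\<le>k. a i * r^i * r^(k - i))"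
    by (rule summable_Cauchy_product[OF s1 s2])
  moreover have "(\<Sum>i\<le>k. a i * r^i * r^(k - i)) = (\<Sum>j\<le>k. a j) * r^k" for k
    by (simp add: sum_distrib_right mult.assoc power_add[symmetric])
  ultimately show ?thesis by simp
qed

lemma summable_card_mindex:
  fixes r :: real
  assumes r: "0 \<le> r" "r < 1"
  shows "summable (\<lambda>k. real (card (mindex M k)) * r^k)"
proof (induction M)
  case 0
  have "(\<lambda>k. real (card (mindex 0 k)) * r^k) = (\<lambda>k. if k = 0 then 1 else 0)"
    by (auto simp: mindex_0 fun_eq_iff)
  then show ?case using sums_single[of 0 "\<lambda>_. 1::real"] by (auto simp: sums_iff)
next
  case (Suc M)
  have "summable (\<lambda>k. (\<Sum>j\<le>k. real (card (mindex M j))) * r^k)"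
    by (rule summable_partial_sums[OF _ r Suc]) simp
  then show ?case by (simp add: card_mindex_Suc)
qed

text \<open>The generating functions converge absolutely for |z| < 1, since the dimensions are
  bounded by the numbers of monomials.\<close>

lemma summable_inv_dim:
  fixes r :: real
  assumes p: "p \<noteq> []" and r: "0 \<le> r" "r < 1"
  shows "summable (\<lambda>k. real (inv_dim q p W k) * r^k)"
proof (induction W)
  case 0
  have "inv_dim q p 0 k \<le> card (mindex (2 * length p) k)" for k
    unfolding inv_dim_def using fun_dim_invariant_harm_space[of "2 * length p" p 0 q k]
      dim_inv_harm_le_card p by simp
  then show ?case
    using r by (intro summable_comparison_test[OF _ summable_card_mindex[OF r, of "2 * length p"]])
      (auto intro!: mult_right_mono)
next
  case (Suc W)
  have "summable (\<lambda>k. (\<Sum>j\<le>k. real (inv_dim q p W j)) * r^k)"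
    by (rule summable_partial_sums[OF _ r Suc]) simp
  then show ?case by (simp add: inv_dim_Suc[OF p])
qed

lemma gen_fun_Suc:
  assumes p: "p \<noteq> []" and z: "cmod z < 1"
  shows "gen_fun (Suc W) q p z = gen_fun W q p z / (1 - z)"
proof -
  let ?a = "\<lambda>k. of_nat (inv_dim q p W k) * z ^ k"
  have s1: "summable (\<lambda>k. norm (?a k))"
    using summable_inv_dim[OF p norm_ge_zero z, of q W] by (simp add: norm_mult norm_power)
  have s2: "summable (\<lambda>k. norm (z ^ k))" using z by (simp add: norm_power summable_geometric)
  have "gen_fun W q p z * (\<Sum>k. z ^ k) = (\<Sum>k. \<Sum>i\<le>k. ?a i * z ^ (k - i))"
    unfolding gen_fun_def inv_dim_def[symmetric] by (rule Cauchy_product[OF s1 s2])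
  also have "\<dots> = (\<Sum>k. of_nat (inv_dim q p (Suc W) k) * z ^ k)"
  proof -
    have "(\<Sum>i\<le>k. ?a i * z ^ (k - i)) = of_nat (inv_dim q p (Suc W) k) * z ^ k" for k
      by (simp add: inv_dim_Suc[OF p] sum_distrib_right mult.assoc power_add[symmetric])
    then show ?thesis by simp
  qed
  also have "\<dots> = gen_fun (Suc W) q p z" by (simp add: gen_fun_def inv_dim_def)
  finally have "gen_fun W q p z * (\<Sum>k. z ^ k) = gen_fun (Suc W) q p z" .
  moreover have "(\<Sum>k. z ^ k) = 1 / (1 - z)" using z by (rule suminf_geometric)
  ultimately show ?thesis by (simp add: field_simps)
qed

lemma gen_fun_fixed_coords:
  assumes p: "p \<noteq> []" and z: "cmod z < 1"
  shows "gen_fun W q p z = (1 - z) powi (- int W) * gen_fun 0 q p z"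
proof -
  have nz: "1 - z \<noteq> 0" using z by auto
  have "(1 - z) powi (- int W) = inverse ((1 - z) ^ W)" by (simp add: power_int_minus)
  moreover have "gen_fun W q p z = inverse ((1 - z) ^ W) * gen_fun 0 q p z"
  proof (induction W)
    case (Suc W)
    have "gen_fun (Suc W) q p z = gen_fun W q p z / (1 - z)" by (rule gen_fun_Suc[OF p z])
    also have "\<dots> = inverse ((1 - z) ^ Suc W) * gen_fun 0 q p z"
      using nz unfolding Suc by (simp add: field_simps)
    finally show ?case .
  qed simp
  ultimately show ?thesis by simp
qed

text \<open>The gcd condition rules out n = 0, since then it would say gcd(q) = q = 1.\<close>

lemma lens_params_nonempty:
  assumes "q \<ge> 2" and "Gcd (set p \<union> {int q}) = 1"
  shows "p \<noteq> []"
proof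
  assume "p = []"
  then have "Gcd {int q} = 1" using assms(2) by simp
  then show False using assms(1) by simp
qed

theorem corollary3p2p4:
  fixes q :: nat and p s :: "int list"
  assumes "q \<ge> 2"
    and "Gcd (set p \<union> {int q}) = 1"
  shows "(\<forall>W z. cmod z < 1 \<longrightarrow>
            gen_fun W q p z = (1 - z) powi (- int W) * gen_fun 0 q p z)
     \<and> ((length s = length p \<and> Gcd (set s \<union> {int q}) = 1 \<and>
         (\<forall>z. cmod z < 1 \<longrightarrow> gen_fun 0 q p z = gen_fun 0 q s z))
        \<longrightarrow> (\<forall>W z. cmod z < 1 \<longrightarrow> gen_fun W q p z = gen_fun W q s z))"
proof -
  have p: "p \<noteq> []" using lens_params_nonempty[OF assms] .
  show ?thesis
  proof (intro conjI allI impI)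
    fix W and z :: complex
    assume "cmod z < 1"
    then show "gen_fun W q p z = (1 - z) powi (- int W) * gen_fun 0 q p z"
      by (rule gen_fun_fixed_coords[OF p])
  next
    fix W and z :: complex
    assume iso: "length s = length p \<and> Gcd (set s \<union> {int q}) = 1 \<and>
                 (\<forall>z. cmod z < 1 \<longrightarrow> gen_fun 0 q p z = gen_fun 0 q s z)"
      and z: "cmod z < 1"
    have s: "s \<noteq> []" using iso p by auto
    show "gen_fun W q p z = gen_fun W q s z"
      using gen_fun_fixed_coords[OF p z, of W q] gen_fun_fixed_coords[OF s z, of W q] iso z by simp
  qed
qed

end
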